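(* Let $\mathbb{Y}=\sum_{(i,j)\in D_{\mathbb{X}}} m_{ij}P_{ij}$ be a fat point scheme in $\mathbb{P}^1\times\mathbb{P}^1$ over a field $K$ of characteristic zero with support $\mathbb{X}$. Then: (a) $\operatorname{HF}_{\Omega^1_{R_{\mathbb{Y}}/K}}(i,j)=0$ if $(i,j)\not\succeq(0,0)$ or $(i,j)=(0,0)$. (b) For $(i,j)\in\mathbb{N}^2$, if $\dim_K (I_{\mathbb{Y}})_{i,j}=0$, then $\operatorname{HF}_{\Omega^1_{R_{\mathbb{Y}}/K}}(i,j)=4ij+2i+2j$. (c) If $\operatorname{HF}_{\mathbb{Y}}(i_0-1,j_0)=\operatorname{HF}_{\mathbb{Y}}(i_0,j_0)=\operatorname{HF}_{\mathbb{Y}}(i_0,j_0-1)$, then for all $(i,j)\succeq(i_0,j_0)$ we have $\operatorname{HF}_{\Omega^1_{R_{\mathbb{Y}}/K}}(i,j)=5\operatorname{HF}_{\mathbb{Y}}(i,j)-\operatorname{HF}_{\mathbb{V}}(i,j)$, where $\mathbb{V}=\sum(m_{ij}+1)P_{ij}$ is the thickening of $\mathbb{Y}$.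
   Context: $S=K[X_0,X_1,Y_0,Y_1]$ with $\deg X_i=(1,0)$, $\deg Y_i=(0,1)$; $(a,b)\preceq(c,d)$ means $a\le c$ and $b\le d$. For a finite set $\mathbb{X}$ of distinct $K$-rational points of $\mathbb{P}^1\times\mathbb{P}^1$, $P_{ij}=Q_i\times R_j$, $D_{\mathbb{X}}=\{(i,j)\mid P_{ij}\in\mathbb{X}\}$, $\wp_{ij}$ its vanishing ideal; for positive integers $m_{ij}$, $I_{\mathbb{Y}}=\bigcap\wp_{ij}^{m_{ij}}$, $R_{\mathbb{Y}}=S/I_{\mathbb{Y}}$, $\operatorname{HF}_{\mathbb{Y}}(i,j)=\dim_K(R_{\mathbb{Y}})_{i,j}$. $\Omega^1_{R_{\mathbb{Y}}/K}$ is the bigraded module of Kähler differentials ($\deg dx_i=(1,0)$, $\deg dy_i=(0,1)$) and $\operatorname{HF}_M(i,j)=\dim_K M_{i,j}$. *)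

theory Defs
  imports Complex_Main "HOL-Library.Poly_Mapping" "HOL-Library.Function_Algebras"
begin

datatype var = X0 | X1 | Y0 | Y1

type_synonym 'k bipoly = "(var \<Rightarrow>\<^sub>0 nat) \<Rightarrow>\<^sub>0 'k"

definition bideg :: "(var \<Rightarrow>\<^sub>0 nat) \<Rightarrow> int \<times> int" where
  "bideg m = (int (Poly_Mapping.lookup m X0 + Poly_Mapping.lookup m X1), int (Poly_Mapping.lookup m Y0 + Poly_Mapping.lookup m Y1))"

text \<open>The homogeneous component S_{(i,j)} (zero for negative i or j).\<close>
definition bihom_part :: "int \<Rightarrow> int \<Rightarrow> 'k::zero bipoly set" where
  "bihom_part i j = {F. \<forall>m\<in>Poly_Mapping.keys F. bideg m = (i, j)}"

definition bihomogeneous :: "'k::zero bipoly \<Rightarrow> bool" where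
  "bihomogeneous F \<longleftrightarrow> (\<exists>i j. F \<in> bihom_part i j)"

definition psmult :: "'k::field \<Rightarrow> 'k bipoly \<Rightarrow> 'k bipoly" where
  "psmult c F = Poly_Mapping.map (\<lambda>x. c * x) F"

definition pdim :: "'k::field bipoly set \<Rightarrow> nat" where
  "pdim V = Vector_Spaces.vector_space.dim psmult V"

definition ideal_gen :: "'k::comm_ring_1 bipoly set \<Rightarrow> 'k bipoly set" where
  "ideal_gen G = {F. \<exists>A c. finite A \<and> A \<subseteq> G \<and> F = (\<Sum>g\<in>A. c g * g)}"

definition ideal_pow :: "'k::comm_ring_1 bipoly set \<Rightarrow> nat \<Rightarrow> 'k bipoly set" where
  "ideal_pow I m = ideal_gen {prod_list fs | fs. length fs = m \<and> set fs \<subseteq> I}"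

text \<open>A K-rational point of P^1 x P^1 given by homogeneous coordinates ([a0:a1],[b0:b1]).\<close>
type_synonym 'k pt = "('k \<times> 'k) \<times> ('k \<times> 'k)"

definition valid_pt :: "'k::field pt \<Rightarrow> bool" where
  "valid_pt P \<longleftrightarrow> fst P \<noteq> (0, 0) \<and> snd P \<noteq> (0, 0)"

definition proj_eq :: "'k::field \<times> 'k \<Rightarrow> 'k \<times> 'k \<Rightarrow> bool" where
  "proj_eq a b \<longleftrightarrow> fst a * snd b = snd a * fst b"

definition same_pt :: "'k::field pt \<Rightarrow> 'k pt \<Rightarrow> bool" where
  "same_pt P Q \<longleftrightarrow> proj_eq (fst P) (fst Q) \<and> proj_eq (snd P) (snd Q)"

definition peval :: "'k::comm_ring_1 bipoly \<Rightarrow> 'k pt \<Rightarrow> 'k" where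
  "peval F P = (\<Sum>m\<in>Poly_Mapping.keys F. Poly_Mapping.lookup F m * fst (fst P) ^ Poly_Mapping.lookup m X0 * snd (fst P) ^ Poly_Mapping.lookup m X1
                                      * fst (snd P) ^ Poly_Mapping.lookup m Y0 * snd (snd P) ^ Poly_Mapping.lookup m Y1)"

definition pt_ideal :: "'k::field pt \<Rightarrow> 'k bipoly set" where
  "pt_ideal P = ideal_gen {F. bihomogeneous F \<and> peval F P = 0}"

definition fat_ideal :: "'k::field pt set \<Rightarrow> ('k pt \<Rightarrow> nat) \<Rightarrow> 'k bipoly set" where
  "fat_ideal X m = (\<Inter>P\<in>X. ideal_pow (pt_ideal P) (m P))"

definition HF :: "'k::field bipoly set \<Rightarrow> int \<Rightarrow> int \<Rightarrow> nat" where
  "HF I i j = pdim (bihom_part i j :: 'k bipoly set) - pdim (I \<inter> bihom_part i j)"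

text \<open>Elements of the free S-module Omega_S = S dX0 + S dX1 + S dY0 + S dY1.\<close>
type_synonym 'k omega = "var \<Rightarrow> 'k bipoly"

definition vdeg :: "var \<Rightarrow> int \<times> int" where
  "vdeg v = (if v = X0 \<or> v = X1 then (1, 0) else (0, 1))"

definition omega_part :: "int \<Rightarrow> int \<Rightarrow> 'k::zero omega set" where
  "omega_part i j = {w. \<forall>v. w v \<in> bihom_part (i - fst (vdeg v)) (j - snd (vdeg v))}"

definition osmult :: "'k::field \<Rightarrow> 'k omega \<Rightarrow> 'k omega" where
  "osmult c w = (\<lambda>v. psmult c (w v))"

definition odim :: "'k::field omega set \<Rightarrow> nat" where
  "odim V = Vector_Spaces.vector_space.dim osmult V"

definition pderiv_var :: "var \<Rightarrow> 'k::comm_ring_1 bipoly \<Rightarrow> 'k bipoly" where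
  "pderiv_var v F = (\<Sum>m\<in>Poly_Mapping.keys F. Poly_Mapping.single (m - Poly_Mapping.single v 1)
                                      (of_nat (Poly_Mapping.lookup m v) * Poly_Mapping.lookup F m))"

definition dF :: "'k::comm_ring_1 bipoly \<Rightarrow> 'k omega" where
  "dF F = (\<lambda>v. pderiv_var v F)"

definition omod_gen :: "'k::comm_ring_1 omega set \<Rightarrow> 'k omega set" where
  "omod_gen G = {w. \<exists>A c. finite A \<and> A \<subseteq> G \<and> w = (\<lambda>v. \<Sum>g\<in>A. c g * g v)}"

text \<open>Relations: I Omega_S + S dI, so that Omega^1_{R/K} = Omega_S / kahler_rel I.\<close>
definition kahler_rel :: "'k::comm_ring_1 bipoly set \<Rightarrow> 'k omega set" where
  "kahler_rel I = omod_gen ({(\<lambda>v. if v = u then F else 0) | u F. F \<in> I} \<union> {dF F | F. F \<in> I})"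

definition HF_Omega :: "'k::field bipoly set \<Rightarrow> int \<Rightarrow> int \<Rightarrow> nat" where
  "HF_Omega I i j = odim (omega_part i j :: 'k omega set) - odim (kahler_rel I \<inter> omega_part i j)"

end

(* Let I be the ideal of the fat point scheme. As I is bihomogeneous, the (i,j)-piece of the relations
   I Omega_S + S dI of the differentials is the sum of (I Omega_S)_(i,j), which has dimension
   2 dim I_(i-1,j) + 2 dim I_(i,j-1), and of d(I_(i,j)), on which d is injective for i > 0 by Euler's
   relation in characteristic 0. A form dG lies in both summands exactly when all partial derivatives
   of G lie in I; comparing the powers of the ideal of a point with the polynomials vanishing there to
   the same order (again by Euler's relation), this happens exactly when G lies in the ideal of the
   thickening V. Counting dimensions gives
     HF_Omega(i,j) = 2 HF(i-1,j) + 2 HF(i,j-1) + HF(i,j) - HF_V(i,j)   for i > 0.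
   Parts (a) and (b) are the degenerate cases Omega_S(i,j) = 0 and I_(i,j) = 0. For (c), linear forms L
   and M of bidegrees (1,0) and (0,1) vanishing nowhere on the support are non-zero-divisors modulo I,
   so HF is stationary at (i0,j0) iff multiplication by L and by M into the (i0,j0)-piece of S/I is
   onto; this propagates to all (i,j) beyond (i0,j0), where the formula becomes 5 HF - HF_V. *)

theory Submission
  imports Defs "HOL-Library.Product_Plus"
begin

abbreviation lookup where "lookup \<equiv> Poly_Mapping.lookup"
abbreviation keys where "keys \<equiv> Poly_Mapping.keys"
abbreviation single where "single \<equiv> Poly_Mapping.single"

lemma poly_mapping_sum_single: "(F::'a \<Rightarrow>\<^sub>0 'b::comm_monoid_add) = (\<Sum>m\<in>keys F. single m (lookup F m))"
  by (rule poly_mapping_eqI) (simp add: lookup_sum lookup_single when_def in_keys_iff)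

lemma poly_mapping_induct[case_names zero single add]:
  assumes "P 0" "\<And>m c. P (single m c)" "\<And>F G. P F \<Longrightarrow> P G \<Longrightarrow> P (F + G)"
  shows "P (F::'a \<Rightarrow>\<^sub>0 'b::comm_monoid_add)"
proof -
  have "P (\<Sum>m\<in>A. single m (lookup F m))" if "finite A" for A
    using that by (induction A rule: finite_induct) (auto intro: assms)
  then show ?thesis by (metis poly_mapping_sum_single finite_keys)
qed

definition var_exp :: "var \<Rightarrow> (var \<Rightarrow>\<^sub>0 nat)" where
  "var_exp v = single v 1"

definition pvar :: "var \<Rightarrow> 'k::comm_ring_1 bipoly" where
  "pvar v = single (var_exp v) 1"

lemma lookup_var_exp: "lookup (var_exp v) u = (if u = v then 1 else 0)"
  by (simp add: var_exp_def lookup_single)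

lemma minus_var_exp_eq_iff: "1 \<le> lookup m v \<Longrightarrow> m - var_exp v = n \<longleftrightarrow> n + var_exp v = m"
  unfolding poly_mapping_eq_iff fun_eq_iff
  by (auto simp: lookup_add lookup_minus lookup_var_exp)

lemma add_minus_var_exp[simp]: "n + var_exp v - var_exp v = n"
  by (rule poly_mapping_eqI) (simp add: lookup_add lookup_minus)

lemma pderiv_var_altdef:
  assumes "finite A" "keys F \<subseteq> A"
  shows "pderiv_var v F = (\<Sum>m\<in>A. single (m - var_exp v) (of_nat (lookup m v) * lookup F m))"
  unfolding pderiv_var_def var_exp_def
  by (rule sum.mono_neutral_left) (use assms in \<open>auto simp: in_keys_iff\<close>)

lemma pderiv_var_0[simp]: "pderiv_var v 0 = 0"
  by (simp add: pderiv_var_def)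

lemma pderiv_var_add: "pderiv_var v (F + G) = pderiv_var v F + pderiv_var v G"
proof -
  let ?A = "keys F \<union> keys G"
  have "pderiv_var v (F + G) = (\<Sum>m\<in>?A. single (m - var_exp v) (of_nat (lookup m v) * lookup (F + G) m))"
    by (rule pderiv_var_altdef) (use keys_add[of F G] in auto)
  also have "\<dots> = (\<Sum>m\<in>?A. single (m - var_exp v) (of_nat (lookup m v) * lookup F m))
                  + (\<Sum>m\<in>?A. single (m - var_exp v) (of_nat (lookup m v) * lookup G m))"
    by (simp add: lookup_add distrib_left single_add sum.distrib)
  also have "\<dots> = pderiv_var v F + pderiv_var v G"
    by (simp add: pderiv_var_altdef[symmetric])
  finally show ?thesis .
qed

lemma pderiv_var_single: "pderiv_var v (single m c) = single (m - var_exp v) (of_nat (lookup m v) * c)"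
  by (cases "c = 0") (simp_all add: pderiv_var_def var_exp_def)

lemma pderiv_var_uminus: "pderiv_var v (- F) = - pderiv_var v F"
  by (metis add.left_inverse eq_neg_iff_add_eq_0 pderiv_var_0 pderiv_var_add)

lemma pderiv_var_diff: "pderiv_var v (F - G) = pderiv_var v F - pderiv_var v G"
  by (simp only: diff_conv_add_uminus pderiv_var_add pderiv_var_uminus)

lemma pderiv_var_mult_single:
  "pderiv_var v (single m1 c1 * single m2 c2)
     = pderiv_var v (single m1 c1) * single m2 c2 + single m1 c1 * pderiv_var v (single m2 c2)"
proof -
  have shift: "1 \<le> lookup m v \<Longrightarrow> m - var_exp v + m' = m + m' - var_exp v"
    and shift': "1 \<le> lookup m v \<Longrightarrow> m' + (m - var_exp v) = m' + m - var_exp v" for m m'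
    by (rule poly_mapping_eqI, simp add: lookup_add lookup_minus lookup_var_exp)+
  have "single (m1 + m2 - var_exp v) (of_nat (lookup m1 v) * (c1 * c2))
        = single (m1 - var_exp v + m2) (of_nat (lookup m1 v) * c1 * c2)"
    by (cases "lookup m1 v = 0") (simp_all add: shift mult.assoc)
  moreover have "single (m1 + m2 - var_exp v) (of_nat (lookup m2 v) * (c1 * c2))
        = single (m1 + (m2 - var_exp v)) (c1 * (of_nat (lookup m2 v) * c2))"
    by (cases "lookup m2 v = 0") (simp_all add: shift' mult.left_commute)
  ultimately show ?thesis
    by (simp add: pderiv_var_single mult_single lookup_add distrib_right single_add)
qed

lemma pderiv_var_mult:
  "pderiv_var v ((F::'k::comm_ring_1 bipoly) * G) = pderiv_var v F * G + F * pderiv_var v G"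
proof (induction F rule: poly_mapping_induct)
  case (single m c)
  show ?case
    by (induction G rule: poly_mapping_induct)
      (simp_all add: pderiv_var_mult_single distrib_left distrib_right pderiv_var_add)
qed (simp_all add: distrib_right pderiv_var_add)

lemma lookup_pderiv_var:
  "lookup (pderiv_var v (F::'k::comm_ring_1 bipoly)) n = of_nat (lookup n v + 1) * lookup F (n + var_exp v)"
proof (induction F rule: poly_mapping_induct)
  case (single m c)
  show ?case
  proof (cases "lookup m v = 0")
    case True
    then have "n + var_exp v \<noteq> m" by (auto simp: poly_mapping_eq_iff fun_eq_iff lookup_add lookup_var_exp)
    then show ?thesis using True by (simp add: pderiv_var_single lookup_single when_def)
  next
    case False
    then have "n + var_exp v = m \<Longrightarrow> (of_nat (lookup m v) :: 'k) = of_nat (lookup n v + 1)"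
      by (auto simp: lookup_add lookup_var_exp)
    then show ?thesis using minus_var_exp_eq_iff[of m v n] False
      by (auto simp: pderiv_var_single lookup_single when_def simp del: of_nat_add)
  qed
qed (simp_all add: pderiv_var_add lookup_add distrib_left)

lemma pderiv_var_commute: "pderiv_var u (pderiv_var v F) = pderiv_var v (pderiv_var u F)"
  by (rule poly_mapping_eqI)
    (simp add: lookup_pderiv_var lookup_add lookup_var_exp add.commute add.left_commute mult.left_commute)

lemma lookup_pvar_mult:
  "lookup (pvar v * F) n = (if 1 \<le> lookup n v then lookup (F :: 'k::comm_ring_1 bipoly) (n - var_exp v) else 0)"
proof (induction F rule: poly_mapping_induct)
  case (single m c)
  have "var_exp v + m = n \<longleftrightarrow> 1 \<le> lookup n v \<and> n - var_exp v = m"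
    using minus_var_exp_eq_iff[of n v m] by (auto simp: add.commute lookup_add lookup_var_exp)
  then show ?case by (auto simp: pvar_def mult_single lookup_single when_def)
qed (simp_all add: distrib_left lookup_add)

lemma pvar_mult_eq_0_iff: "pvar v * F = 0 \<longleftrightarrow> (F :: 'k::comm_ring_1 bipoly) = 0"
proof
  assume "pvar v * F = 0"
  then have "lookup (pvar v * F) (n + var_exp v) = 0" for n by simp
  then show "F = 0" by (intro poly_mapping_eqI) (simp add: lookup_pvar_mult lookup_add lookup_var_exp)
qed simp

lemma psmult_eq_mult: "psmult c F = single 0 c * F"
  by (simp add: psmult_def mult_map_scale_conv_mult)

lemma lookup_psmult[simp]: "lookup (psmult c F) n = c * lookup F n"
  by (simp add: psmult_def Poly_Mapping.map.rep_eq when_def)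

lemma psmult_psmult: "psmult c (psmult d F) = psmult (c * d) F"
  by (rule poly_mapping_eqI) (simp add: mult.assoc)

lemma psmult_1: "psmult 1 F = F"
  by (rule poly_mapping_eqI) simp

lemma pderiv_var_psmult: "pderiv_var v (psmult c F) = psmult c (pderiv_var v (F :: 'k::field bipoly))"
  by (simp add: psmult_eq_mult pderiv_var_mult pderiv_var_single)

definition coord :: "'k pt \<Rightarrow> var \<Rightarrow> 'k" where
  "coord P v = (case v of X0 \<Rightarrow> fst (fst P) | X1 \<Rightarrow> snd (fst P) | Y0 \<Rightarrow> fst (snd P) | Y1 \<Rightarrow> snd (snd P))"

lemma coord_simps[simp]:
  "coord P X0 = fst (fst P)" "coord P X1 = snd (fst P)" "coord P Y0 = fst (snd P)" "coord P Y1 = snd (snd P)"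
  by (simp_all add: coord_def)

definition monom_eval :: "(var \<Rightarrow>\<^sub>0 nat) \<Rightarrow> 'k::comm_ring_1 pt \<Rightarrow> 'k" where
  "monom_eval m P = coord P X0 ^ lookup m X0 * coord P X1 ^ lookup m X1 * coord P Y0 ^ lookup m Y0 * coord P Y1 ^ lookup m Y1"

lemma peval_altdef:
  assumes "finite A" "keys F \<subseteq> A"
  shows "peval F P = (\<Sum>m\<in>A. lookup F m * monom_eval m P)"
  unfolding peval_def monom_eval_def
  by (rule sum.mono_neutral_cong_left) (use assms in \<open>auto simp: in_keys_iff mult.assoc\<close>)

lemma peval_0[simp]: "peval 0 P = 0"
  by (simp add: peval_def)

lemma peval_add: "peval (F + G) P = peval F P + peval G P"
proof -
  let ?A = "keys F \<union> keys G"
  have "peval (F + G) P = (\<Sum>m\<in>?A. lookup (F + G) m * monom_eval m P)"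
    by (rule peval_altdef) (use keys_add[of F G] in auto)
  also have "\<dots> = (\<Sum>m\<in>?A. lookup F m * monom_eval m P) + (\<Sum>m\<in>?A. lookup G m * monom_eval m P)"
    by (simp add: lookup_add distrib_right sum.distrib)
  also have "\<dots> = peval F P + peval G P"
    by (simp add: peval_altdef[symmetric])
  finally show ?thesis .
qed

lemma peval_single: "peval (single m c) P = c * monom_eval m P"
  by (cases "c = 0") (simp_all add: peval_def monom_eval_def mult.assoc)

lemma monom_eval_add: "monom_eval (m1 + m2) P = monom_eval m1 P * monom_eval m2 P"
  by (simp add: monom_eval_def lookup_add power_add mult_ac)

lemma peval_uminus: "peval (- F) P = - peval F P"
  by (metis add.left_inverse eq_neg_iff_add_eq_0 peval_0 peval_add)

lemma peval_diff: "peval (F - G) P = peval F P - peval G P"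
  by (simp only: diff_conv_add_uminus peval_add peval_uminus)

lemma peval_mult: "peval ((F::'k::comm_ring_1 bipoly) * G) P = peval F P * peval G P"
proof (induction F rule: poly_mapping_induct)
  case (single m c)
  show ?case
  proof (induction G rule: poly_mapping_induct)
    case (single m' c')
    show ?case by (simp add: mult_single peval_single monom_eval_add mult_ac)
  qed (simp_all add: distrib_left peval_add)
qed (simp_all add: distrib_right peval_add)

lemma peval_psmult: "peval (psmult c F) P = c * peval F P"
  by (simp add: psmult_eq_mult peval_mult peval_single monom_eval_def)

lemma peval_pvar: "peval (pvar v) P = coord P v"
  by (cases v) (simp_all add: pvar_def peval_single monom_eval_def lookup_var_exp)

section \<open>Bihomogeneous components and Euler's relation\<close>

lemma bideg_add: "bideg (a + b) = (fst (bideg a) + fst (bideg b), snd (bideg a) + snd (bideg b))"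
  by (simp add: bideg_def lookup_add)

lemma bideg_var_exp: "bideg (var_exp v) = vdeg v"
  by (cases v) (simp_all add: bideg_def vdeg_def lookup_var_exp)

lemma bihom_part_iff: "F \<in> bihom_part i j \<longleftrightarrow> (\<forall>n. lookup F n \<noteq> 0 \<longrightarrow> bideg n = (i, j))"
  by (auto simp: bihom_part_def in_keys_iff)

lemma bihom_part_0[simp]: "0 \<in> bihom_part i j"
  by (simp add: bihom_part_def)

lemma bihom_part_add: "F \<in> bihom_part i j \<Longrightarrow> G \<in> bihom_part i j \<Longrightarrow> F + G \<in> bihom_part i j"
  unfolding bihom_part_iff lookup_add by (metis add.left_neutral add.right_neutral)

lemma bihom_part_uminus: "F \<in> bihom_part i j \<Longrightarrow> - F \<in> bihom_part i j"
  by (simp add: bihom_part_iff)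

lemma bihom_part_diff: "(F::'k::ab_group_add bipoly) \<in> bihom_part i j \<Longrightarrow> G \<in> bihom_part i j \<Longrightarrow> F - G \<in> bihom_part i j"
  unfolding diff_conv_add_uminus by (intro bihom_part_add bihom_part_uminus)

lemma bihom_part_psmult: "F \<in> bihom_part i j \<Longrightarrow> psmult c F \<in> bihom_part i j"
  by (simp add: bihom_part_iff)

lemma bihom_part_mult:
  "F \<in> bihom_part i j \<Longrightarrow> G \<in> bihom_part k l \<Longrightarrow> (F * G :: 'k::comm_ring_1 bipoly) \<in> bihom_part (i + k) (j + l)"
  unfolding bihom_part_def using keys_mult[of F G] by (fastforce simp: bideg_add)

lemma bihom_part_neg: "i < 0 \<or> j < 0 \<Longrightarrow> bihom_part i j = {0}"
  by (auto simp: bihom_part_def bideg_def)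

lemma bihom_part_pderiv_var:
  "F \<in> bihom_part i j \<Longrightarrow> pderiv_var v F \<in> bihom_part (i - fst (vdeg v)) (j - snd (vdeg v))"
proof -
  assume F: "F \<in> bihom_part i j"
  have "bideg n = (i - fst (vdeg v), j - snd (vdeg v))" if "lookup (pderiv_var v F) n \<noteq> 0" for n
  proof -
    have "lookup F (n + var_exp v) \<noteq> 0" using that by (metis lookup_pderiv_var mult_zero_right)
    then have "bideg (n + var_exp v) = (i, j)" using F by (simp add: bihom_part_iff)
    then show ?thesis by (simp add: bideg_add bideg_var_exp prod_eq_iff)
  qed
  then show ?thesis by (simp add: bihom_part_iff)
qed

lemma pvar_bihom_part: "pvar v \<in> bihom_part (fst (vdeg v)) (snd (vdeg v))"
  by (simp add: pvar_def bihom_part_def bideg_var_exp)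

lemma bihom_part_0_0: "F \<in> bihom_part 0 0 \<Longrightarrow> F = single 0 (lookup F 0)"
proof (rule poly_mapping_eqI)
  fix n assume F: "F \<in> bihom_part 0 0"
  show "lookup F n = lookup (single 0 (lookup F 0)) n"
  proof (cases "n = 0")
    case False
    then obtain v where "lookup n v \<noteq> 0" by (auto simp: poly_mapping_eq_iff fun_eq_iff)
    then have "bideg n \<noteq> (0, 0)" by (cases v) (auto simp: bideg_def)
    then show ?thesis using F False by (auto simp: bihom_part_iff lookup_single when_def)
  qed simp
qed

definition bihom_comp :: "int \<Rightarrow> int \<Rightarrow> 'k::zero bipoly \<Rightarrow> 'k bipoly" where
  "bihom_comp i j F = Abs_poly_mapping (\<lambda>n. if bideg n = (i, j) then lookup F n else 0)"

lemma lookup_bihom_comp: "lookup (bihom_comp i j F) n = (if bideg n = (i, j) then lookup F n else 0)"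
proof -
  have "finite {n. (if bideg n = (i, j) then lookup F n else 0) \<noteq> 0}"
    by (rule finite_subset[of _ "keys F"]) (auto simp: in_keys_iff)
  then show ?thesis by (simp add: bihom_comp_def)
qed

lemma bihom_comp_in: "bihom_comp i j F \<in> bihom_part i j"
  by (simp add: bihom_part_iff lookup_bihom_comp)

lemma bihom_comp_id: "F \<in> bihom_part i j \<Longrightarrow> bihom_comp i j F = F"
  by (rule poly_mapping_eqI) (auto simp: lookup_bihom_comp bihom_part_iff)

lemma bihom_comp_add: "bihom_comp i j (F + G) = bihom_comp i j F + bihom_comp i j (G :: 'k::comm_monoid_add bipoly)"
  by (rule poly_mapping_eqI) (simp add: lookup_bihom_comp lookup_add)

lemma bihom_comp_diff: "bihom_comp i j (F - G) = bihom_comp i j F - bihom_comp i j (G :: 'k::ab_group_add bipoly)"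
  by (rule poly_mapping_eqI) (simp add: lookup_bihom_comp lookup_minus)

lemma bihom_comp_0[simp]: "bihom_comp i j 0 = 0"
  by (rule poly_mapping_eqI) (simp add: lookup_bihom_comp)

lemma bihom_comp_sum: "bihom_comp i j (sum f A) = (\<Sum>a\<in>A. bihom_comp i j (f a :: 'k::comm_monoid_add bipoly))"
  by (induction A rule: infinite_finite_induct) (simp_all add: bihom_comp_add)

lemma bihom_comp_mult:
  assumes G: "G \<in> bihom_part a b"
  shows "bihom_comp i j (c * G) = bihom_comp (i - a) (j - b) c * (G :: 'k::comm_ring_1 bipoly)"
proof (rule poly_mapping_eqI)
  fix n
  let ?c0 = "bihom_comp (i - a) (j - b) c"
  have "c * G = ?c0 * G + (c - ?c0) * G" by (simp add: algebra_simps)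
  moreover have "?c0 * G \<in> bihom_part i j"
    using bihom_part_mult[OF bihom_comp_in[of "i - a" "j - b" c] G] by simp
  moreover have "lookup ((c - ?c0) * G) n = 0" if "bideg n = (i, j)"
  proof -
    have "n \<notin> keys ((c - ?c0) * G)"
    proof
      assume "n \<in> keys ((c - ?c0) * G)"
      then obtain k l where kl: "n = k + l" "k \<in> keys (c - ?c0)" "l \<in> keys G" using keys_mult by blast
      then have "bideg k = (i - a, j - b)" using G that by (auto simp: bihom_part_def bideg_add prod_eq_iff)
      then show False using kl(2) by (simp add: in_keys_iff lookup_minus lookup_bihom_comp)
    qed
    then show ?thesis by (simp add: in_keys_iff)
  qed
  ultimately show "lookup (bihom_comp i j (c * G)) n = lookup (?c0 * G) n"
    by (auto simp: lookup_bihom_comp lookup_add bihom_part_iff)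
qed

lemma bihom_comp_pderiv_var:
  "bihom_comp (i - fst (vdeg v)) (j - snd (vdeg v)) (pderiv_var v F) = pderiv_var v (bihom_comp i j F)"
  by (rule poly_mapping_eqI) (auto simp: lookup_bihom_comp lookup_pderiv_var bideg_add bideg_var_exp prod_eq_iff)

definition euler_op :: "var \<Rightarrow> var \<Rightarrow> 'k::comm_ring_1 bipoly \<Rightarrow> 'k bipoly" where
  "euler_op u0 u1 F = pvar u0 * pderiv_var u0 F + pvar u1 * pderiv_var u1 F"

lemma lookup_pvar_mult_pderiv_var:
  "lookup (pvar v * pderiv_var v F) n = of_nat (lookup n v) * lookup (F :: 'k::comm_ring_1 bipoly) n"
proof (cases "1 \<le> lookup n v")
  case True
  have "n - var_exp v + var_exp v = n" using minus_var_exp_eq_iff[OF True] by blast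
  moreover have "lookup (n - var_exp v) v + 1 = lookup n v" using True by (simp add: lookup_minus lookup_var_exp)
  ultimately show ?thesis using True by (simp add: lookup_pvar_mult lookup_pderiv_var)
next
  case False
  then have "lookup n v = 0" by simp
  then show ?thesis by (simp add: lookup_pvar_mult)
qed

lemma euler_op_eq:
  assumes "\<And>n. n \<in> keys F \<Longrightarrow> of_nat (lookup n u0 + lookup n u1) = c"
  shows "euler_op u0 u1 F = psmult c (F :: 'k::field bipoly)"
proof (rule poly_mapping_eqI)
  fix n
  have "lookup (euler_op u0 u1 F) n = of_nat (lookup n u0 + lookup n u1) * lookup F n"
    by (simp add: euler_op_def lookup_add lookup_pvar_mult_pderiv_var distrib_right)
  then show "lookup (euler_op u0 u1 F) n = lookup (psmult c F) n"
    using assms[of n] by (cases "n \<in> keys F") (auto simp: in_keys_iff)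
qed

lemma euler_X:
  assumes "F \<in> bihom_part i j"
  shows "euler_op X0 X1 F = psmult (of_int i) (F :: 'k::field bipoly)"
proof (rule euler_op_eq)
  fix n assume "n \<in> keys F"
  then have "int (lookup n X0 + lookup n X1) = i" using assms by (auto simp: bihom_part_def bideg_def)
  then show "of_nat (lookup n X0 + lookup n X1) = (of_int i :: 'k)" by (metis of_int_of_nat_eq)
qed

lemma euler_Y:
  assumes "F \<in> bihom_part i j"
  shows "euler_op Y0 Y1 F = psmult (of_int j) (F :: 'k::field bipoly)"
proof (rule euler_op_eq)
  fix n assume "n \<in> keys F"
  then have "int (lookup n Y0 + lookup n Y1) = j" using assms by (auto simp: bihom_part_def bideg_def)
  then show "of_nat (lookup n Y0 + lookup n Y1) = (of_int j :: 'k)" by (metis of_int_of_nat_eq)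
qed

lemma euler_op_split:
  assumes "euler_op u0 u1 F = psmult c F" "c \<noteq> (0 :: 'k::field)"
  shows "F = pvar u0 * psmult (inverse c) (pderiv_var u0 F) + pvar u1 * psmult (inverse c) (pderiv_var u1 F)"
proof -
  have "F = psmult (inverse c) (psmult c F)" using assms(2) by (simp add: psmult_psmult psmult_1)
  then show ?thesis unfolding assms(1)[symmetric] euler_op_def by (simp add: psmult_eq_mult algebra_simps)
qed

definition is_ideal :: "'k::comm_ring_1 bipoly set \<Rightarrow> bool" where
  "is_ideal J \<longleftrightarrow> 0 \<in> J \<and> (\<forall>a b. a \<in> J \<longrightarrow> b \<in> J \<longrightarrow> a + b \<in> J) \<and> (\<forall>c a. a \<in> J \<longrightarrow> c * a \<in> J)"

lemma is_idealI:
  "0 \<in> J \<Longrightarrow> (\<And>a b. a \<in> J \<Longrightarrow> b \<in> J \<Longrightarrow> a + b \<in> J) \<Longrightarrow> (\<And>c a. a \<in> J \<Longrightarrow> c * a \<in> J) \<Longrightarrow> is_ideal J"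
  by (simp add: is_ideal_def)

lemma is_ideal_0: "is_ideal J \<Longrightarrow> 0 \<in> J"
  by (simp add: is_ideal_def)

lemma is_ideal_add: "is_ideal J \<Longrightarrow> a \<in> J \<Longrightarrow> b \<in> J \<Longrightarrow> a + b \<in> J"
  by (simp add: is_ideal_def)

lemma is_ideal_mult: "is_ideal J \<Longrightarrow> a \<in> J \<Longrightarrow> c * a \<in> J"
  by (simp add: is_ideal_def)

lemma is_ideal_uminus: "is_ideal J \<Longrightarrow> a \<in> J \<Longrightarrow> - a \<in> J"
  using is_ideal_mult[of J a "- 1"] by simp

lemma is_ideal_diff: "is_ideal J \<Longrightarrow> a \<in> J \<Longrightarrow> b \<in> J \<Longrightarrow> a - b \<in> J"
  by (metis diff_conv_add_uminus is_ideal_add is_ideal_uminus)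

lemma is_ideal_psmult: "is_ideal J \<Longrightarrow> a \<in> J \<Longrightarrow> psmult c a \<in> J"
  by (simp add: psmult_eq_mult is_ideal_mult)

lemma is_ideal_sum: "is_ideal J \<Longrightarrow> (\<And>x. x \<in> A \<Longrightarrow> f x \<in> J) \<Longrightarrow> sum f A \<in> J"
  by (induction A rule: infinite_finite_induct) (auto intro: is_ideal_add is_ideal_0)

lemma is_ideal_INT: "(\<And>P. P \<in> X \<Longrightarrow> is_ideal (J P)) \<Longrightarrow> is_ideal (\<Inter>P\<in>X. J P)"
  by (auto simp: is_ideal_def)

lemma is_ideal_UNIV: "is_ideal (UNIV :: 'k::comm_ring_1 bipoly set)"
  by (rule is_idealI) auto

lemma sum_mult_extend:
  assumes "finite B" "A \<subseteq> B"
  shows "(\<Sum>g\<in>A. c g * f g) = (\<Sum>g\<in>B. (if g \<in> A then c g else 0) * (f g :: 'a::comm_ring_1))"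
  by (rule sum.mono_neutral_cong_left) (use assms in auto)

lemma ideal_gen_is_ideal: "is_ideal (ideal_gen G)"
proof (rule is_idealI)
  show "0 \<in> ideal_gen G" unfolding ideal_gen_def by (rule CollectI, rule exI[of _ "{}"]) auto
next
  fix a b assume "a \<in> ideal_gen G" "b \<in> ideal_gen G"
  then obtain A c B d where A: "finite A" "A \<subseteq> G" "a = (\<Sum>g\<in>A. c g * g)"
    and B: "finite B" "B \<subseteq> G" "b = (\<Sum>g\<in>B. d g * g)" by (auto simp: ideal_gen_def)
  let ?e = "\<lambda>g. (if g \<in> A then c g else 0) + (if g \<in> B then d g else 0)"
  have "a = (\<Sum>g\<in>A \<union> B. (if g \<in> A then c g else 0) * g)"
    using sum_mult_extend[of "A \<union> B" A c "\<lambda>g. g"] A B by simp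
  moreover have "b = (\<Sum>g\<in>A \<union> B. (if g \<in> B then d g else 0) * g)"
    using sum_mult_extend[of "A \<union> B" B d "\<lambda>g. g"] A B by simp
  ultimately have "a + b = (\<Sum>g\<in>A \<union> B. ?e g * g)"
    by (simp add: sum.distrib[symmetric] distrib_right)
  then show "a + b \<in> ideal_gen G" unfolding ideal_gen_def
    by (intro CollectI exI[of _ "A \<union> B"] exI[of _ ?e]) (use A B in simp)
next
  fix c a assume "a \<in> ideal_gen G"
  then obtain A d where A: "finite A" "A \<subseteq> G" "a = (\<Sum>g\<in>A. d g * g)" by (auto simp: ideal_gen_def)
  have "c * a = (\<Sum>g\<in>A. (c * d g) * g)" using A by (simp add: sum_distrib_left mult.assoc)
  then show "c * a \<in> ideal_gen G" unfolding ideal_gen_def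
    by (intro CollectI exI[of _ A] exI[of _ "\<lambda>g. c * d g"]) (use A in simp)
qed

lemma ideal_gen_base: "g \<in> G \<Longrightarrow> g \<in> ideal_gen G"
  unfolding ideal_gen_def by (rule CollectI, rule exI[of _ "{g}"], rule exI[of _ "\<lambda>_. 1"]) simp

lemma ideal_gen_minimal: "G \<subseteq> J \<Longrightarrow> is_ideal J \<Longrightarrow> ideal_gen G \<subseteq> J"
  by (auto simp: ideal_gen_def intro!: is_ideal_sum is_ideal_mult)

lemma ideal_gen_mult_closed:
  assumes "x \<in> ideal_gen G" "y \<in> ideal_gen H" "\<And>g h. g \<in> G \<Longrightarrow> h \<in> H \<Longrightarrow> g * h \<in> J" "is_ideal J"
  shows "x * y \<in> J"
proof -
  have "ideal_gen H \<subseteq> {y. g * y \<in> J}" if "g \<in> G" for g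
    by (rule ideal_gen_minimal, use assms(3) that in blast)
      (rule is_idealI, use assms(4) in \<open>auto simp: distrib_left mult.left_commute intro: is_ideal_0 is_ideal_add is_ideal_mult\<close>)
  then have "G \<subseteq> {x. \<forall>y\<in>ideal_gen H. x * y \<in> J}" by auto
  moreover have "is_ideal {x. \<forall>y\<in>ideal_gen H. x * y \<in> J}"
    by (rule is_idealI) (use assms(4) in \<open>auto simp: distrib_right mult.assoc intro: is_ideal_0 is_ideal_add is_ideal_mult\<close>)
  ultimately have "ideal_gen G \<subseteq> {x. \<forall>y\<in>ideal_gen H. x * y \<in> J}" by (rule ideal_gen_minimal)
  then show ?thesis using assms(1,2) by auto
qed

lemma ideal_pow_is_ideal: "is_ideal (ideal_pow I m)"
  by (simp add: ideal_pow_def ideal_gen_is_ideal)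

lemma ideal_pow_0: "ideal_pow (I :: 'k::comm_ring_1 bipoly set) 0 = UNIV"
proof -
  have "(1 :: 'k bipoly) \<in> ideal_pow I 0"
    unfolding ideal_pow_def by (rule ideal_gen_base) auto
  then show ?thesis using is_ideal_mult[OF ideal_pow_is_ideal, of 1 I 0] by auto
qed

lemma ideal_pow_mult_Suc:
  assumes "x \<in> I" "y \<in> ideal_pow I k"
  shows "x * y \<in> ideal_pow I (Suc k)"
proof -
  have "{prod_list fs |fs. length fs = k \<and> set fs \<subseteq> I} \<subseteq> {y. x * y \<in> ideal_pow I (Suc k)}"
  proof
    fix y assume "y \<in> {prod_list fs |fs. length fs = k \<and> set fs \<subseteq> I}"
    then obtain fs where fs: "y = prod_list fs" "length fs = k" "set fs \<subseteq> I" by auto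
    have "x * y = prod_list (x # fs)" using fs by simp
    also have "\<dots> \<in> ideal_pow I (Suc k)" unfolding ideal_pow_def
      by (rule ideal_gen_base, rule CollectI, rule exI[of _ "x # fs"]) (use fs assms(1) in auto)
    finally show "y \<in> {y. x * y \<in> ideal_pow I (Suc k)}" by simp
  qed
  moreover have "is_ideal {y. x * y \<in> ideal_pow I (Suc k)}"
    by (rule is_idealI)
      (auto simp: distrib_left mult.left_commute intro: is_ideal_0 is_ideal_add is_ideal_mult ideal_pow_is_ideal)
  ultimately have "ideal_pow I k \<subseteq> {y. x * y \<in> ideal_pow I (Suc k)}"
    unfolding ideal_pow_def[of _ k] by (rule ideal_gen_minimal)
  then show ?thesis using assms(2) by auto
qed

lemma ideal_pow_ideal_gen:
  "ideal_pow (ideal_gen G) m = ideal_gen {prod_list fs | fs. length fs = m \<and> set fs \<subseteq> G}"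
  (is "_ = ideal_gen (?prods m)")
proof
  have "prod_list fs \<in> ideal_gen (?prods (length fs))" if "set fs \<subseteq> ideal_gen G" for fs
    using that
  proof (induction fs)
    case (Cons f fs)
    have "f * prod_list fs \<in> ideal_gen (?prods (Suc (length fs)))"
    proof (rule ideal_gen_mult_closed[of f G _ "?prods (length fs)"])
      show "f \<in> ideal_gen G" "prod_list fs \<in> ideal_gen (?prods (length fs))" using Cons by auto
      fix g h assume "g \<in> G" "h \<in> ?prods (length fs)"
      then obtain hs where "h = prod_list hs" "length hs = length fs" "set hs \<subseteq> G" by blast
      then show "g * h \<in> ideal_gen (?prods (Suc (length fs)))"
        using \<open>g \<in> G\<close> by (intro ideal_gen_base CollectI exI[of _ "g # hs"]) auto
    qed (rule ideal_gen_is_ideal)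
    then show ?case by simp
  qed (auto intro: ideal_gen_base)
  then show "ideal_pow (ideal_gen G) m \<subseteq> ideal_gen (?prods m)"
    unfolding ideal_pow_def by (intro ideal_gen_minimal ideal_gen_is_ideal) blast
  have "?prods m \<subseteq> {prod_list fs |fs. length fs = m \<and> set fs \<subseteq> ideal_gen G}"
    using ideal_gen_base[of _ G] by blast
  then have "?prods m \<subseteq> ideal_pow (ideal_gen G) m"
    unfolding ideal_pow_def using ideal_gen_base by blast
  then show "ideal_gen (?prods m) \<subseteq> ideal_pow (ideal_gen G) m"
    by (rule ideal_gen_minimal[OF _ ideal_pow_is_ideal])
qed

lemma fat_ideal_is_ideal: "is_ideal (fat_ideal X m)"
  unfolding fat_ideal_def by (intro is_ideal_INT ideal_pow_is_ideal)

lemma fat_ideal_empty: "fat_ideal {} m = UNIV"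
  by (simp add: fat_ideal_def)

lemma prod_list_bihomogeneous:
  "set fs \<subseteq> {F. bihomogeneous F} \<Longrightarrow> bihomogeneous (prod_list (fs :: 'k::comm_ring_1 bipoly list))"
proof (induction fs)
  case Nil
  have "(1 :: 'k bipoly) \<in> bihom_part 0 0" by (simp add: bihom_part_def bideg_def flip: single_one)
  then show ?case by (auto simp: bihomogeneous_def)
qed (auto simp: bihomogeneous_def intro: bihom_part_mult)

lemma bihom_comp_ideal_gen:
  assumes "\<forall>h\<in>H. bihomogeneous h" "F \<in> ideal_gen H"
  shows "bihom_comp i j F \<in> ideal_gen H"
proof -
  obtain A d where A: "finite A" "A \<subseteq> H" "F = (\<Sum>g\<in>A. d g * g)" using assms(2) by (auto simp: ideal_gen_def)
  have "bihom_comp i j (d g * g) \<in> ideal_gen H" if "g \<in> A" for g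
  proof -
    obtain a b where "g \<in> bihom_part a b" using assms(1) A(2) \<open>g \<in> A\<close> unfolding bihomogeneous_def by blast
    then have "bihom_comp i j (d g * g) = bihom_comp (i - a) (j - b) (d g) * g" by (rule bihom_comp_mult)
    then show ?thesis using A(2) \<open>g \<in> A\<close> by (auto intro: is_ideal_mult[OF ideal_gen_is_ideal] ideal_gen_base)
  qed
  then show ?thesis unfolding A(3) bihom_comp_sum by (intro is_ideal_sum[OF ideal_gen_is_ideal])
qed

lemma bihom_comp_fat_ideal: "F \<in> fat_ideal X m \<Longrightarrow> bihom_comp i j F \<in> fat_ideal X m"
  unfolding fat_ideal_def pt_ideal_def ideal_pow_ideal_gen
  by (auto intro!: bihom_comp_ideal_gen prod_list_bihomogeneous)

section \<open>Powers of the ideal of a point and vanishing order\<close>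

fun pderivs :: "var list \<Rightarrow> 'k::comm_ring_1 bipoly \<Rightarrow> 'k bipoly" where
  "pderivs [] F = F"
| "pderivs (v # vs) F = pderivs vs (pderiv_var v F)"

definition vanishing :: "'k::comm_ring_1 pt \<Rightarrow> nat \<Rightarrow> 'k bipoly set" where
  "vanishing P m = {F. \<forall>vs. length vs < m \<longrightarrow> peval (pderivs vs F) P = 0}"

lemma vanishing_0[simp]: "vanishing P 0 = UNIV"
  by (simp add: vanishing_def)

lemma vanishing_Suc_iff:
  "F \<in> vanishing P (Suc k) \<longleftrightarrow> peval F P = 0 \<and> (\<forall>v. pderiv_var v F \<in> vanishing P k)"
proof
  assume "F \<in> vanishing P (Suc k)"
  then show "peval F P = 0 \<and> (\<forall>v. pderiv_var v F \<in> vanishing P k)"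
    unfolding vanishing_def by (auto dest: spec[of _ "[]"] spec[of _ "_ # _"])
next
  assume "peval F P = 0 \<and> (\<forall>v. pderiv_var v F \<in> vanishing P k)"
  then show "F \<in> vanishing P (Suc k)"
    unfolding vanishing_def by (auto simp: less_Suc_eq_0_disj length_Suc_conv)
qed

lemma vanishing_antimono: "k \<le> m \<Longrightarrow> vanishing P m \<subseteq> vanishing P k"
  by (auto simp: vanishing_def)

lemma pderivs_0[simp]: "pderivs vs 0 = 0"
  by (induction vs) simp_all

lemma pderivs_add: "pderivs vs (F + G) = pderivs vs F + pderivs vs G"
  by (induction vs arbitrary: F G) (simp_all add: pderiv_var_add)

lemma pderivs_diff: "pderivs vs (F - G) = pderivs vs F - pderivs vs G"
  by (induction vs arbitrary: F G) (simp_all add: pderiv_var_diff)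

lemma pderivs_psmult: "pderivs vs (psmult c F) = psmult c (pderivs vs (F :: 'k::field bipoly))"
  by (induction vs arbitrary: F) (simp_all add: pderiv_var_psmult)

lemma pderivs_pderiv_var: "pderivs vs (pderiv_var v F) = pderiv_var v (pderivs vs F)"
proof (induction vs arbitrary: F)
  case (Cons u vs)
  have "pderivs (u # vs) (pderiv_var v F) = pderivs vs (pderiv_var v (pderiv_var u F))"
    by (simp only: pderivs.simps pderiv_var_commute[of u v F])
  then show ?case by (simp only: Cons pderivs.simps)
qed simp

lemma pderivs_bihom_part: "F \<in> bihom_part i j \<Longrightarrow> \<exists>i' j'. pderivs vs F \<in> bihom_part i' j'"
proof (induction vs arbitrary: F i j)
  case (Cons v vs)
  show ?case using Cons.IH[OF bihom_part_pderiv_var[OF Cons.prems, of v]] by simp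
qed auto

lemma vanishing_add: "F \<in> vanishing P m \<Longrightarrow> G \<in> vanishing P m \<Longrightarrow> F + G \<in> vanishing P m"
  by (simp add: vanishing_def pderivs_add peval_add)

lemma vanishing_diff: "F \<in> vanishing P m \<Longrightarrow> G \<in> vanishing P m \<Longrightarrow> F - G \<in> vanishing P m"
  by (simp add: vanishing_def pderivs_diff peval_diff)

lemma vanishing_mult: "F \<in> vanishing P a \<Longrightarrow> G \<in> vanishing P b \<Longrightarrow> F * G \<in> vanishing P (a + b)"
proof (induction "a + b" arbitrary: a b F G)
  case (Suc k)
  have "peval (F * G) P = 0"
  proof (cases a)
    case 0
    then have "peval G P = 0" using Suc by (cases b) (auto simp: vanishing_Suc_iff)
    then show ?thesis by (simp add: peval_mult)
  qed (use Suc.prems in \<open>simp add: vanishing_Suc_iff peval_mult\<close>)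
  moreover have "pderiv_var v F * G \<in> vanishing P k" for v
  proof (cases a)
    case 0
    then have "G \<in> vanishing P k" using Suc vanishing_antimono[of k b P] by auto
    then show ?thesis using Suc.hyps(1)[of 0 k] by simp
  next
    case (Suc a')
    then show ?thesis using Suc.hyps Suc.prems by (auto simp: vanishing_Suc_iff)
  qed
  moreover have "F * pderiv_var v G \<in> vanishing P k" for v
  proof (cases b)
    case 0
    then have "F \<in> vanishing P k" using Suc vanishing_antimono[of k a P] by auto
    then show ?thesis using Suc.hyps(1)[of k 0] by simp
  next
    case (Suc b')
    then show ?thesis using Suc.hyps Suc.prems by (auto simp: vanishing_Suc_iff)
  qed
  ultimately show ?case
    unfolding Suc.hyps(2)[symmetric] by (simp add: vanishing_Suc_iff pderiv_var_mult vanishing_add)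
qed simp

lemma vanishing_is_ideal: "is_ideal (vanishing P m)"
proof (rule is_idealI)
  show "0 \<in> vanishing P m" by (simp add: vanishing_def)
next
  fix c a assume "a \<in> vanishing P m"
  then show "c * a \<in> vanishing P m" using vanishing_mult[of c P 0 a m] by simp
qed (rule vanishing_add)

lemma pt_ideal_subset_vanishing: "pt_ideal P \<subseteq> vanishing P 1"
  unfolding pt_ideal_def
  by (rule ideal_gen_minimal[OF _ vanishing_is_ideal]) (auto simp: vanishing_Suc_iff[of _ P 0, simplified])

lemma ideal_pow_subset_vanishing: "ideal_pow (pt_ideal P) m \<subseteq> vanishing P m"
proof -
  have "set fs \<subseteq> pt_ideal P \<Longrightarrow> prod_list fs \<in> vanishing P (length fs)" for fs
  proof (induction fs)
    case (Cons f fs)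
    then have "f \<in> vanishing P 1" using pt_ideal_subset_vanishing[of P] by auto
    then show ?case using vanishing_mult[OF _ Cons.IH] Cons.prems by fastforce
  qed simp
  then show ?thesis
    unfolding ideal_pow_def by (auto intro!: ideal_gen_minimal[OF _ vanishing_is_ideal])
qed

definition factor_vars :: "(var \<times> var) set" where
  "factor_vars = {(X0, X1), (Y0, Y1)}"

text \<open>For the coordinates (u0, u1) of one factor P^1, the linear form of that factor vanishing at P,
  and the derivative in the direction of P.\<close>

definition polar_form :: "var \<Rightarrow> var \<Rightarrow> 'k::field pt \<Rightarrow> 'k bipoly" where
  "polar_form u0 u1 P = psmult (coord P u1) (pvar u0) - psmult (coord P u0) (pvar u1)"

definition polar_deriv :: "var \<Rightarrow> var \<Rightarrow> 'k::field pt \<Rightarrow> 'k bipoly \<Rightarrow> 'k bipoly" where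
  "polar_deriv u0 u1 P F = psmult (coord P u0) (pderiv_var u0 F) + psmult (coord P u1) (pderiv_var u1 F)"

lemma factor_vars_vdeg: "(u0, u1) \<in> factor_vars \<Longrightarrow> vdeg u1 = vdeg u0"
  by (auto simp: factor_vars_def vdeg_def)

lemma valid_pt_factor_coords: "valid_pt P \<Longrightarrow> (u0, u1) \<in> factor_vars \<Longrightarrow> (coord P u0, coord P u1) \<noteq> (0, 0)"
  by (auto simp: factor_vars_def valid_pt_def prod_eq_iff)

lemma euler_op_factor_vars:
  "(u0, u1) \<in> factor_vars \<Longrightarrow> F \<in> bihom_part i j \<Longrightarrow> \<exists>c. euler_op u0 u1 F = psmult c (F :: 'k::field bipoly)"
  by (auto simp: factor_vars_def dest: euler_X euler_Y)

lemma polar_form_in_pt_ideal: "vdeg u1 = vdeg u0 \<Longrightarrow> polar_form u0 u1 P \<in> pt_ideal P"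
  unfolding pt_ideal_def bihomogeneous_def polar_form_def
  using pvar_bihom_part[of u0] pvar_bihom_part[of u1]
  by (intro ideal_gen_base CollectI conjI exI bihom_part_diff bihom_part_psmult)
    (simp_all add: peval_diff peval_psmult peval_pvar mult.commute)

lemma polar_deriv_bihom_part:
  "vdeg u1 = vdeg u0 \<Longrightarrow> F \<in> bihom_part i j \<Longrightarrow> polar_deriv u0 u1 P F \<in> bihom_part (i - fst (vdeg u0)) (j - snd (vdeg u0))"
  unfolding polar_deriv_def by (metis bihom_part_add bihom_part_psmult bihom_part_pderiv_var)

lemma peval_polar_deriv: "euler_op u0 u1 G = psmult c G \<Longrightarrow> peval (polar_deriv u0 u1 P G) P = c * peval G P"
  by (drule arg_cong[of _ _ "\<lambda>H. peval H P"])
    (simp add: euler_op_def polar_deriv_def peval_add peval_mult peval_psmult peval_pvar)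

lemma polar_deriv_vanishing:
  assumes "(u0, u1) \<in> factor_vars" "F \<in> bihom_part i j" "F \<in> vanishing P m"
  shows "polar_deriv u0 u1 P F \<in> vanishing P m"
  unfolding vanishing_def
proof (intro CollectI allI impI)
  fix vs :: "var list" assume "length vs < m"
  obtain i' j' where "pderivs vs F \<in> bihom_part i' j'" using pderivs_bihom_part[OF assms(2)] by blast
  then obtain c where "euler_op u0 u1 (pderivs vs F) = psmult c (pderivs vs F)"
    using euler_op_factor_vars[OF assms(1)] by blast
  moreover have "pderivs vs (polar_deriv u0 u1 P F) = polar_deriv u0 u1 P (pderivs vs F)"
    by (simp add: polar_deriv_def pderivs_add pderivs_psmult pderivs_pderiv_var)
  ultimately show "peval (pderivs vs (polar_deriv u0 u1 P F)) P = 0"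
    using assms(3) \<open>length vs < m\<close> by (simp add: peval_polar_deriv vanishing_def)
qed

lemma polar_identities:
  assumes "euler_op u0 u1 F = psmult c F"
  shows "psmult (coord P u0 * c) F = pvar u0 * polar_deriv u0 u1 P F - polar_form u0 u1 P * pderiv_var u1 F"
    and "psmult (coord P u1 * c) F = pvar u1 * polar_deriv u0 u1 P F + polar_form u0 u1 P * pderiv_var u0 F"
proof -
  have "psmult (coord P u * c) F = single 0 (coord P u) * euler_op u0 u1 F" for u
    by (simp add: assms psmult_eq_mult mult_single mult.assoc[symmetric])
  then show "psmult (coord P u0 * c) F = pvar u0 * polar_deriv u0 u1 P F - polar_form u0 u1 P * pderiv_var u1 F"
    and "psmult (coord P u1 * c) F = pvar u1 * polar_deriv u0 u1 P F + polar_form u0 u1 P * pderiv_var u0 F"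
    by (simp_all add: euler_op_def polar_deriv_def polar_form_def psmult_eq_mult algebra_simps)
qed

lemma ideal_pow_cancel_psmult: "psmult c F \<in> ideal_pow I m \<Longrightarrow> c \<noteq> (0::'k::field) \<Longrightarrow> F \<in> ideal_pow I m"
  using is_ideal_psmult[OF ideal_pow_is_ideal, of "psmult c F" I m "inverse c"] by (simp add: psmult_psmult psmult_1)

text \<open>The inductive step of the comparison of powers and symbolic powers: by the polar identities,
  F is recovered from its polar derivative and from its two partial derivatives along one factor.\<close>

lemma ideal_pow_Suc_from_lower:
  fixes P :: "'k::field pt"
  assumes "valid_pt P" "(u0, u1) \<in> factor_vars" "F \<in> bihom_part i j" "F \<in> vanishing P (Suc k)"
    and euler: "euler_op u0 u1 F = psmult c F" "c \<noteq> 0"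
    and lower: "\<And>G l. G \<in> bihom_part (i - fst (vdeg u0)) (j - snd (vdeg u0)) \<Longrightarrow> l \<in> {k, Suc k} \<Longrightarrow>
      G \<in> vanishing P l \<Longrightarrow> G \<in> ideal_pow (pt_ideal P) l"
  shows "F \<in> ideal_pow (pt_ideal P) (Suc k)"
proof -
  let ?J = "ideal_pow (pt_ideal P) (Suc k)"
  have vdeg: "vdeg u1 = vdeg u0" using assms(2) by (rule factor_vars_vdeg)
  have "pderiv_var u F \<in> ideal_pow (pt_ideal P) k" if "u \<in> {u0, u1}" for u
  proof (rule lower)
    show "pderiv_var u F \<in> bihom_part (i - fst (vdeg u0)) (j - snd (vdeg u0))"
      using bihom_part_pderiv_var[OF assms(3), of u] vdeg that by auto
    show "pderiv_var u F \<in> vanishing P k" using assms(4) by (simp add: vanishing_Suc_iff)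
  qed simp
  then have l: "polar_form u0 u1 P * pderiv_var u F \<in> ?J" if "u \<in> {u0, u1}" for u
    using ideal_pow_mult_Suc[OF polar_form_in_pt_ideal[OF vdeg]] that by blast
  have "polar_deriv u0 u1 P F \<in> ?J"
    by (rule lower[OF polar_deriv_bihom_part[OF vdeg assms(3)] _ polar_deriv_vanishing[OF assms(2-4)]]) simp
  then have d: "pvar u * polar_deriv u0 u1 P F \<in> ?J" for u
    by (rule is_ideal_mult[OF ideal_pow_is_ideal])
  consider "coord P u0 \<noteq> 0" | "coord P u1 \<noteq> 0" using valid_pt_factor_coords[OF assms(1,2)] by auto
  then show ?thesis
  proof cases
    case 1
    have "psmult (coord P u0 * c) F \<in> ?J"
      unfolding polar_identities(1)[OF euler(1)] using l d by (auto intro: is_ideal_diff[OF ideal_pow_is_ideal])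
    then show ?thesis using 1 euler(2) by (elim ideal_pow_cancel_psmult) simp
  next
    case 2
    have "psmult (coord P u1 * c) F \<in> ?J"
      unfolding polar_identities(2)[OF euler(1)] using l d by (auto intro: is_ideal_add[OF ideal_pow_is_ideal])
    then show ?thesis using 2 euler(2) by (elim ideal_pow_cancel_psmult) simp
  qed
qed

lemma bihom_part_0_0_peval_eq_0:
  assumes "F \<in> bihom_part 0 0" "peval F P = 0"
  shows "F = 0"
proof -
  have "F = single 0 (lookup F 0)" using assms(1) by (rule bihom_part_0_0)
  moreover have "peval (single 0 (lookup F 0)) P = lookup F 0" by (simp add: peval_single monom_eval_def)
  ultimately show ?thesis using assms(2) by (metis single_zero)
qed

lemma vanishing_Suc_imp_ideal_pow_Suc:
  fixes P :: "'k::field_char_0 pt"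
  assumes "valid_pt P"
    and IH: "\<And>i j G. G \<in> bihom_part i j \<Longrightarrow> G \<in> vanishing P k \<Longrightarrow> G \<in> ideal_pow (pt_ideal P) k"
  shows "F \<in> bihom_part i j \<Longrightarrow> F \<in> vanishing P (Suc k) \<Longrightarrow> F \<in> ideal_pow (pt_ideal P) (Suc k)"
proof (induction "nat (i + j)" arbitrary: i j F rule: less_induct)
  case less
  have lower: "G \<in> ideal_pow (pt_ideal P) l"
    if "G \<in> bihom_part i' j'" "l \<in> {k, Suc k}" "G \<in> vanishing P l" "nat (i' + j') < nat (i + j)" for G l i' j'
  proof (cases "l = k")
    case False
    then show ?thesis using that less.hyps[OF that(4,1)] by simp
  qed (use that IH[OF that(1)] in simp)
  consider "i < 0 \<or> j < 0" | "i = 0" "j = 0" | "0 < i" "0 \<le> j" | "i = 0" "0 < j" by linarith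
  then show ?case
  proof cases
    case 1
    then have "F = 0" using less.prems(1) bihom_part_neg by blast
    then show ?thesis by (simp add: is_ideal_0[OF ideal_pow_is_ideal])
  next
    case 2
    then have "F \<in> bihom_part 0 0" "peval F P = 0" using less.prems by (simp_all add: vanishing_Suc_iff)
    then have "F = 0" by (rule bihom_part_0_0_peval_eq_0)
    then show ?thesis by (simp add: is_ideal_0[OF ideal_pow_is_ideal])
  next
    case 3
    have "G \<in> ideal_pow (pt_ideal P) l"
      if "G \<in> bihom_part (i - fst (vdeg X0)) (j - snd (vdeg X0))" "l \<in> {k, Suc k}" "G \<in> vanishing P l" for G l
      using lower[OF that] 3 by (simp add: vdeg_def)
    then show ?thesis using 3
      by (intro ideal_pow_Suc_from_lower[OF assms(1) _ less.prems euler_X[OF less.prems(1)]]) (simp_all add: factor_vars_def)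
  next
    case 4
    have "G \<in> ideal_pow (pt_ideal P) l"
      if "G \<in> bihom_part (i - fst (vdeg Y0)) (j - snd (vdeg Y0))" "l \<in> {k, Suc k}" "G \<in> vanishing P l" for G l
      using lower[OF that] 4 by (simp add: vdeg_def)
    then show ?thesis using 4
      by (intro ideal_pow_Suc_from_lower[OF assms(1) _ less.prems euler_Y[OF less.prems(1)]]) (simp_all add: factor_vars_def)
  qed
qed

lemma vanishing_imp_ideal_pow:
  fixes P :: "'k::field_char_0 pt"
  assumes "valid_pt P" "F \<in> bihom_part i j" "F \<in> vanishing P m"
  shows "F \<in> ideal_pow (pt_ideal P) m"
  using assms(2,3)
proof (induction m arbitrary: i j F)
  case (Suc k)
  show ?case by (rule vanishing_Suc_imp_ideal_pow_Suc[OF assms(1) Suc.IH Suc.prems])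
qed (simp add: ideal_pow_0)

lemma ideal_pow_eq_vanishing:
  fixes P :: "'k::field_char_0 pt"
  assumes "valid_pt P" "F \<in> bihom_part i j"
  shows "F \<in> ideal_pow (pt_ideal P) m \<longleftrightarrow> F \<in> vanishing P m"
  using vanishing_imp_ideal_pow[OF assms] ideal_pow_subset_vanishing by blast

lemma vanishing_cancel:
  fixes L :: "'k::field bipoly"
  assumes "peval L P \<noteq> 0" "L * F \<in> vanishing P m"
  shows "F \<in> vanishing P m"
  using assms(2)
proof (induction m arbitrary: F)
  case (Suc k)
  have F: "F \<in> vanishing P k" using Suc.IH[of F] Suc.prems vanishing_antimono[of k "Suc k" P] by auto
  have "peval F P = 0" using Suc.prems assms(1) by (simp add: vanishing_Suc_iff peval_mult)
  moreover have "pderiv_var v F \<in> vanishing P k" for v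
  proof -
    have "pderiv_var v (L * F) \<in> vanishing P k" using Suc.prems by (simp add: vanishing_Suc_iff)
    moreover have "pderiv_var v L * F \<in> vanishing P k" by (rule is_ideal_mult[OF vanishing_is_ideal F])
    ultimately have "pderiv_var v (L * F) - pderiv_var v L * F \<in> vanishing P k" by (rule vanishing_diff)
    then have "L * pderiv_var v F \<in> vanishing P k" by (simp add: pderiv_var_mult)
    then show ?thesis by (rule Suc.IH)
  qed
  ultimately show ?case by (simp add: vanishing_Suc_iff)
qed simp

lemma ideal_pow_cancel:
  fixes P :: "'k::field_char_0 pt"
  assumes "valid_pt P" "peval L P \<noteq> 0" "F \<in> bihom_part i j" "L * F \<in> ideal_pow (pt_ideal P) m"
  shows "F \<in> ideal_pow (pt_ideal P) m"
  using vanishing_cancel[OF assms(2)] ideal_pow_subset_vanishing assms vanishing_imp_ideal_pow by blast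

lemma ideal_pow_Suc_iff_pderiv:
  fixes P :: "'k::field_char_0 pt"
  assumes "valid_pt P" "F \<in> bihom_part i j" "0 < m"
  shows "F \<in> ideal_pow (pt_ideal P) (Suc m)
    \<longleftrightarrow> F \<in> ideal_pow (pt_ideal P) m \<and> (\<forall>v. pderiv_var v F \<in> ideal_pow (pt_ideal P) m)"
proof -
  have "F \<in> vanishing P (Suc m) \<longleftrightarrow> F \<in> vanishing P m \<and> (\<forall>v. pderiv_var v F \<in> vanishing P m)"
  proof
    assume "F \<in> vanishing P (Suc m)"
    then show "F \<in> vanishing P m \<and> (\<forall>v. pderiv_var v F \<in> vanishing P m)"
      using vanishing_antimono[of m "Suc m" P] by (auto simp: vanishing_Suc_iff)
  next
    assume F: "F \<in> vanishing P m \<and> (\<forall>v. pderiv_var v F \<in> vanishing P m)"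
    moreover obtain m' where "m = Suc m'" using \<open>0 < m\<close> by (cases m) auto
    ultimately show "F \<in> vanishing P (Suc m)" by (simp add: vanishing_Suc_iff)
  qed
  then show ?thesis
    using ideal_pow_eq_vanishing[OF assms(1,2)] ideal_pow_eq_vanishing[OF assms(1) bihom_part_pderiv_var[OF assms(2)]]
    by simp
qed

section \<open>Finite-dimensional subspaces of arbitrary vector spaces\<close>

context vector_space begin

definition fin_dim_subspace :: "'b set \<Rightarrow> bool" where
  "fin_dim_subspace V \<longleftrightarrow> local.subspace V \<and> (\<exists>B. finite B \<and> V \<subseteq> local.span B)"

lemma fin_dim_subspace_basis:
  assumes "local.fin_dim_subspace V"
  obtains B where "B \<subseteq> V" "local.independent B" "V \<subseteq> local.span B" "finite B" "card B = local.dim V"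
proof -
  obtain B where B: "B \<subseteq> V" "local.independent B" "V \<subseteq> local.span B" "card B = local.dim V" by (rule basis_exists)
  obtain T where T: "finite T" "V \<subseteq> local.span T" using assms by (auto simp: fin_dim_subspace_def)
  have "finite B" using independent_span_bound[OF T(1) B(2)] B(1) T(2) by auto
  then show ?thesis using B that by blast
qed

lemma fin_dim_subspace_independent_card:
  assumes "local.fin_dim_subspace V" "local.independent B" "B \<subseteq> V"
  shows "finite B \<and> card B \<le> local.dim V"
proof -
  obtain C where "C \<subseteq> V" "V \<subseteq> local.span C" "finite C" "card C = local.dim V"
    using assms(1) by (rule fin_dim_subspace_basis)
  then show ?thesis using independent_span_bound[of C B] assms(2,3) by auto
qed

lemma fin_dim_subspace_subset: "local.fin_dim_subspace V \<Longrightarrow> local.subspace W \<Longrightarrow> W \<subseteq> V \<Longrightarrow> local.fin_dim_subspace W"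
  by (auto simp: fin_dim_subspace_def)

lemma fin_dim_subspace_dim_mono: "local.fin_dim_subspace V \<Longrightarrow> W \<subseteq> V \<Longrightarrow> local.dim W \<le> local.dim V"
  by (metis dim_le_card fin_dim_subspace_basis order_trans)

lemma fin_dim_subspace_dim_eq:
  assumes "local.fin_dim_subspace V" "local.subspace W" "W \<subseteq> V" "local.dim W = local.dim V"
  shows "W = V"
proof -
  obtain B where B: "B \<subseteq> W" "local.independent B" "W \<subseteq> local.span B" "finite B" "card B = local.dim W"
    using fin_dim_subspace_subset[OF assms(1-3)] by (rule fin_dim_subspace_basis)
  have "x \<in> local.span B" if "x \<in> V" for x
  proof (rule ccontr)
    assume "x \<notin> local.span B"
    then have "local.independent (insert x B)" "x \<notin> B" using B(2) independent_insertI span_base by blast+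
    moreover have "insert x B \<subseteq> V" using that B(1) assms(3) by auto
    ultimately show False
      using fin_dim_subspace_independent_card[OF assms(1)] B(4,5) assms(4) by fastforce
  qed
  then show ?thesis using span_minimal[OF B(1) assms(2)] assms(3) by blast
qed

lemma dim_singleton_0: "local.dim {0} = 0"
  using dim_eq_card[of "{}" "{0}"] independent_empty span_insert_0[of "{}"] by simp

lemma fin_dim_subspace_dim_eq_0: "local.fin_dim_subspace V \<Longrightarrow> local.dim V = 0 \<Longrightarrow> V = {0}"
  by (metis card_0_eq empty_subsetI fin_dim_subspace_basis fin_dim_subspace_def span_empty subset_antisym
      subset_singletonD subspace_0 insert_subset)

lemma fin_dim_subspace_singleton_0: "local.fin_dim_subspace {0}"
  by (auto simp: fin_dim_subspace_def intro!: exI[of _ "{}"])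

lemma fin_dim_subspace_sums:
  assumes "local.fin_dim_subspace A" "local.fin_dim_subspace B"
  shows "local.fin_dim_subspace {x + y | x y. x \<in> A \<and> y \<in> B}"
proof -
  obtain T1 T2 where "finite T1" "A \<subseteq> local.span T1" "finite T2" "B \<subseteq> local.span T2"
    using assms by (auto simp: fin_dim_subspace_def)
  then have "finite (T1 \<union> T2)" "{x + y | x y. x \<in> A \<and> y \<in> B} \<subseteq> local.span (T1 \<union> T2)"
    using span_mono[of T1 "T1 \<union> T2"] span_mono[of T2 "T1 \<union> T2"] by (auto intro!: span_add)
  then show ?thesis
    using assms subspace_sums unfolding fin_dim_subspace_def by blast
qed

lemma independent_Un_span_Int:
  assumes "local.independent (A \<union> C)" "A \<inter> C = {}" "finite A" "finite C" "x \<in> local.span A" "x \<in> local.span C"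
  shows "x = 0"
proof -
  obtain u where u: "x = (\<Sum>v\<in>A. u v *s v)" using assms(5) span_finite[OF assms(3)] by auto
  obtain w where w: "x = (\<Sum>v\<in>C. w v *s v)" using assms(6) span_finite[OF assms(4)] by auto
  let ?c = "\<lambda>v. if v \<in> A then u v else - w v"
  have "(\<Sum>v\<in>A \<union> C. ?c v *s v) = (\<Sum>v\<in>A. ?c v *s v) + (\<Sum>v\<in>C. ?c v *s v)"
    using assms(3,4,2) by (rule sum.union_disjoint)
  also have "(\<Sum>v\<in>A. ?c v *s v) = x" unfolding u by (rule sum.cong) auto
  also have "(\<Sum>v\<in>C. ?c v *s v) = (\<Sum>v\<in>C. - (w v *s v))" using assms(2) by (intro sum.cong) auto
  also have "\<dots> = - x" unfolding w by (simp add: sum_negf)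
  finally have "(\<Sum>v\<in>A \<union> C. ?c v *s v) = 0" by simp
  then have "u v = 0" if "v \<in> A" for v
    using independentD[OF assms(1) _ subset_refl, of ?c v] assms(3,4) that by simp
  then show ?thesis unfolding u by simp
qed

end

context vector_space_pair begin

lemma fin_dim_subspace_image:
  assumes "Vector_Spaces.linear s1 s2 f" "vs1.fin_dim_subspace V"
  shows "vs2.fin_dim_subspace (f ` V)"
  using assms linear_spans_image linear_subspace_image unfolding vs1.fin_dim_subspace_def vs2.fin_dim_subspace_def
  by (metis finite_imageI)

lemma span_image_Diff_kernel:
  assumes "Vector_Spaces.linear s1 s2 f" "\<And>b. b \<in> C \<Longrightarrow> f b = 0"
  shows "vs2.span (f ` B) \<subseteq> vs2.span (f ` (B - C))"
proof (rule vs2.span_minimal)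
  show "f ` B \<subseteq> vs2.span (f ` (B - C))"
  proof
    fix y assume "y \<in> f ` B"
    then obtain b where "b \<in> B" "y = f b" by blast
    then show "y \<in> vs2.span (f ` (B - C))"
      using assms(2)[of b] by (cases "b \<in> C") (auto intro: vs2.span_base simp: vs2.span_zero)
  qed
qed simp

lemma rank_nullity:
  assumes lf: "Vector_Spaces.linear s1 s2 f" and V: "vs1.fin_dim_subspace V"
  shows "vs1.dim V = vs1.dim (V \<inter> {x. f x = 0}) + vs2.dim (f ` V)"
proof -
  let ?K = "V \<inter> {x. f x = 0}"
  have sV: "vs1.subspace V" using V by (simp add: vs1.fin_dim_subspace_def)
  have "vs1.subspace ?K" using sV linear_subspace_kernel[OF lf] by (intro vs1.subspace_inter) auto
  then have "vs1.fin_dim_subspace ?K" using vs1.fin_dim_subspace_subset[OF V] by blast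
  then obtain BK where BK: "BK \<subseteq> ?K" "vs1.independent BK" "?K \<subseteq> vs1.span BK" "finite BK" "card BK = vs1.dim ?K"
    by (rule vs1.fin_dim_subspace_basis)
  obtain B where B: "BK \<subseteq> B" "B \<subseteq> V" "vs1.independent B" "V \<subseteq> vs1.span B"
    using vs1.maximal_independent_subset_extend[of BK V] BK(1,2) by blast
  have fB: "finite B" using vs1.fin_dim_subspace_independent_card[OF V B(3,2)] by blast
  let ?B1 = "B - BK"
  have inj: "inj_on f (vs1.span ?B1)"
    unfolding linear_inj_on_iff_eq_0[OF lf vs1.subspace_span]
  proof (intro ballI impI)
    fix x assume x: "x \<in> vs1.span ?B1" "f x = 0"
    have "vs1.span ?B1 \<subseteq> V" using B(2) sV by (intro vs1.span_minimal) auto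
    then have "x \<in> vs1.span BK" using x BK(3) by auto
    moreover have "vs1.independent (?B1 \<union> BK)" using B(1,3) by (simp add: Un_absorb2)
    ultimately show "x = 0" using vs1.independent_Un_span_Int[of ?B1 BK x] fB BK(4) x(1) by auto
  qed
  have "vs2.independent (f ` ?B1)"
    using B(3) vs1.independent_mono by (intro linear_independent_injective_image[OF lf _ inj]) blast
  moreover have "f ` V \<subseteq> vs2.span (f ` ?B1)"
    using linear_spans_image[OF lf B(4)] span_image_Diff_kernel[OF lf, of BK B] BK(1) by blast
  ultimately have "card (f ` ?B1) = vs2.dim (f ` V)" using B(2) by (intro vs2.basis_card_eq_dim) auto
  moreover have "inj_on f ?B1" using inj vs1.span_superset inj_on_subset by blast
  then have "card (f ` ?B1) = card ?B1" by (rule card_image)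
  moreover have "card ?B1 = card B - card BK" using B(1) fB by (simp add: card_Diff_subset finite_subset)
  moreover have "card BK \<le> card B" using B(1) fB by (rule card_mono[rotated])
  moreover have "card B = vs1.dim V" using vs1.basis_card_eq_dim[OF B(2,4,3)] .
  ultimately show ?thesis using BK(5) by linarith
qed

lemma dim_image_inj:
  assumes "Vector_Spaces.linear s1 s2 f" "vs1.fin_dim_subspace V" "\<And>x. x \<in> V \<Longrightarrow> f x = 0 \<Longrightarrow> x = 0"
  shows "vs2.dim (f ` V) = vs1.dim V"
proof -
  have "V \<inter> {x. f x = 0} = {0}"
    using assms linear_0[OF assms(1)] by (auto simp: vs1.fin_dim_subspace_def vs1.subspace_0)
  then show ?thesis using rank_nullity[OF assms(1,2)] vs1.dim_singleton_0 by simp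
qed

end

definition pair_scale :: "('a \<Rightarrow> 'b \<Rightarrow> 'b) \<Rightarrow> 'a \<Rightarrow> 'b \<times> 'b \<Rightarrow> 'b \<times> 'b" where
  "pair_scale s c p = (s c (fst p), s c (snd p))"

context vector_space begin

lemma vector_space_pair_scale: "vector_space (pair_scale scale)"
  by unfold_locales (simp_all add: pair_scale_def prod_eq_iff scale_right_distrib scale_left_distrib)

lemma fin_dim_subspace_Times:
  assumes A: "local.fin_dim_subspace A" and B: "local.fin_dim_subspace B"
  shows "vector_space.fin_dim_subspace (pair_scale scale) (A \<times> B)"
    and "vector_space.dim (pair_scale scale) (A \<times> B) = local.dim A + local.dim B"
proof -
  interpret ps: vector_space "pair_scale scale" by (rule vector_space_pair_scale)
  interpret from_pair: vector_space_pair "pair_scale scale" scale ..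
  interpret to_pair: vector_space_pair scale "pair_scale scale" ..
  have lin_fst: "Vector_Spaces.linear (pair_scale scale) scale fst"
    and lin_snd: "Vector_Spaces.linear (pair_scale scale) scale snd"
    and lin_inl: "Vector_Spaces.linear scale (pair_scale scale) (\<lambda>x. (x, 0))"
    and lin_inr: "Vector_Spaces.linear scale (pair_scale scale) (\<lambda>x. (0, x))"
    unfolding Vector_Spaces.linear_iff by (auto simp: pair_scale_def ps.vector_space_axioms vector_space_axioms)
  have sub: "ps.subspace (A' \<times> B')" if "local.subspace A'" "local.subspace B'" for A' B'
    using that unfolding ps.subspace_def
    by (auto simp: pair_scale_def zero_prod_def subspace_0 subspace_add subspace_scale)
  have sA: "local.subspace A" and sB: "local.subspace B" using A B by (auto simp: fin_dim_subspace_def)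
  obtain T1 T2 where T: "finite T1" "A \<subseteq> local.span T1" "finite T2" "B \<subseteq> local.span T2"
    using A B by (auto simp: fin_dim_subspace_def)
  let ?T = "(\<lambda>x. (x, 0)) ` T1 \<union> (\<lambda>x. (0, x)) ` T2"
  have "(a, b) \<in> ps.span ?T" if "a \<in> A" "b \<in> B" for a b
  proof -
    have "(a, 0) \<in> ps.span ((\<lambda>x. (x, 0)) ` T1)" "(0, b) \<in> ps.span ((\<lambda>x. (0, x)) ` T2)"
      using to_pair.linear_spans_image[OF lin_inl T(2)] to_pair.linear_spans_image[OF lin_inr T(4)] that by auto
    then have "(a, 0) + (0, b) \<in> ps.span ?T"
      using ps.span_mono[of _ ?T] by (intro ps.span_add) blast+
    then show ?thesis by simp
  qed
  then show fV: "ps.fin_dim_subspace (A \<times> B)"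
    unfolding ps.fin_dim_subspace_def using sub[OF sA sB] T by (intro conjI exI[of _ ?T]) auto
  have "ps.fin_dim_subspace ({0} \<times> B)"
    using ps.fin_dim_subspace_subset[OF fV sub[OF subspace_single_0 sB]] subspace_0[OF sA] by blast
  from from_pair.dim_image_inj[OF lin_snd this] have "ps.dim ({0} \<times> B) = local.dim B"
    by (auto simp: zero_prod_def snd_image_times)
  moreover have "A \<times> B \<inter> {p. fst p = 0} = {0} \<times> B" "fst ` (A \<times> B) = A"
    using subspace_0[OF sA] subspace_0[OF sB] by (auto simp: zero_prod_def)
  ultimately show "ps.dim (A \<times> B) = local.dim A + local.dim B"
    using from_pair.rank_nullity[OF lin_fst fV] by simp
qed

lemma dim_sums_Int:
  assumes A: "local.fin_dim_subspace A" and B: "local.fin_dim_subspace B"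
  shows "local.dim {x + y | x y. x \<in> A \<and> y \<in> B} + local.dim (A \<inter> B) = local.dim A + local.dim B"
proof -
  interpret ps: vector_space "pair_scale scale" by (rule vector_space_pair_scale)
  interpret from_pair: vector_space_pair "pair_scale scale" scale ..
  have lin_sum: "Vector_Spaces.linear (pair_scale scale) scale (\<lambda>p. fst p + snd p)"
    and lin_fst: "Vector_Spaces.linear (pair_scale scale) scale fst"
    unfolding Vector_Spaces.linear_iff
    by (auto simp: pair_scale_def scale_right_distrib ps.vector_space_axioms vector_space_axioms)
  have sB: "local.subspace B" using B by (simp add: fin_dim_subspace_def)
  let ?K = "A \<times> B \<inter> {p. fst p + snd p = 0}"
  have fV: "ps.fin_dim_subspace (A \<times> B)" by (rule fin_dim_subspace_Times(1)[OF A B])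
  have "ps.subspace ?K"
    using fV from_pair.linear_subspace_kernel[OF lin_sum] by (intro ps.subspace_inter) (auto simp: ps.fin_dim_subspace_def)
  then have fK: "ps.fin_dim_subspace ?K" using ps.fin_dim_subspace_subset[OF fV] by blast
  have "fst ` ?K = A \<inter> B"
  proof
    show "fst ` ?K \<subseteq> A \<inter> B"
    proof
      fix x assume "x \<in> fst ` ?K"
      then obtain y where "x \<in> A" "y \<in> B" "x + y = 0" by auto
      then have "x \<in> A" "y \<in> B" "x = - y" by (simp_all add: eq_neg_iff_add_eq_0)
      then show "x \<in> A \<inter> B" using sB subspace_neg by auto
    qed
    show "A \<inter> B \<subseteq> fst ` ?K"
    proof
      fix x assume "x \<in> A \<inter> B"
      then have "(x, - x) \<in> ?K" using sB subspace_neg by auto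
      then show "x \<in> fst ` ?K" by (intro image_eqI[of _ _ "(x, - x)"]) auto
    qed
  qed
  moreover from from_pair.dim_image_inj[OF lin_fst fK] have "local.dim (fst ` ?K) = ps.dim ?K"
    by (auto simp: zero_prod_def)
  moreover have "(\<lambda>p. fst p + snd p) ` (A \<times> B) = {x + y | x y. x \<in> A \<and> y \<in> B}" by force
  ultimately show ?thesis
    using from_pair.rank_nullity[OF lin_sum fV] fin_dim_subspace_Times(2)[OF A B] by simp
qed

end

lemma vector_space_psmult: "vector_space (psmult :: 'k::field \<Rightarrow> 'k bipoly \<Rightarrow> 'k bipoly)"
  by unfold_locales (simp_all add: poly_mapping_eq_iff fun_eq_iff lookup_add distrib_left distrib_right mult.assoc)

lemma vector_space_osmult: "vector_space (osmult :: 'k::field \<Rightarrow> 'k omega \<Rightarrow> 'k omega)"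
proof -
  interpret vector_space "psmult :: 'k \<Rightarrow> 'k bipoly \<Rightarrow> 'k bipoly" by (rule vector_space_psmult)
  show ?thesis by unfold_locales (simp_all add: osmult_def fun_eq_iff scale_right_distrib scale_left_distrib)
qed

interpretation bipoly: vector_space "psmult :: 'k::field \<Rightarrow> 'k bipoly \<Rightarrow> 'k bipoly"
  by (rule vector_space_psmult)

interpretation omega: vector_space "osmult :: 'k::field \<Rightarrow> 'k omega \<Rightarrow> 'k omega"
  by (rule vector_space_osmult)

interpretation bipoly_pair:
  vector_space_pair "psmult :: 'k::field \<Rightarrow> 'k bipoly \<Rightarrow> 'k bipoly" "psmult :: 'k \<Rightarrow> 'k bipoly \<Rightarrow> 'k bipoly" ..

interpretation bipoly_omega:
  vector_space_pair "psmult :: 'k::field \<Rightarrow> 'k bipoly \<Rightarrow> 'k bipoly" "osmult :: 'k \<Rightarrow> 'k omega \<Rightarrow> 'k omega" ..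

lemma bihom_part_subspace: "bipoly.subspace (bihom_part i j :: 'k::field bipoly set)"
  unfolding bipoly.subspace_def by (auto intro: bihom_part_add bihom_part_psmult)

lemma var_poly_mapping_eqI:
  "lookup m X0 = lookup m' X0 \<Longrightarrow> lookup m X1 = lookup m' X1 \<Longrightarrow> lookup m Y0 = lookup m' Y0 \<Longrightarrow> lookup m Y1 = lookup m' Y1
    \<Longrightarrow> m = m'"
  by (rule poly_mapping_eqI) (case_tac k; simp)

lemma finite_bideg_eq: "finite {m :: var \<Rightarrow>\<^sub>0 nat. bideg m = (i, j)}"
proof -
  let ?N = "nat i + nat j"
  let ?g = "\<lambda>m :: var \<Rightarrow>\<^sub>0 nat. (lookup m X0, lookup m X1, lookup m Y0, lookup m Y1)"
  have "inj_on ?g {m. bideg m = (i, j)}" by (rule inj_onI) (auto intro: var_poly_mapping_eqI)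
  moreover have "?g ` {m. bideg m = (i, j)} \<subseteq> {..?N} \<times> {..?N} \<times> {..?N} \<times> {..?N}"
    by (auto simp: bideg_def)
  ultimately show ?thesis
    by (intro finite_imageD[of ?g]) (auto intro: finite_subset[of _ "{..?N} \<times> {..?N} \<times> {..?N} \<times> {..?N}"])
qed

definition bideg_monomials :: "int \<Rightarrow> int \<Rightarrow> 'k::field bipoly set" where
  "bideg_monomials i j = (\<lambda>m. single m 1) ` {m. bideg m = (i, j)}"

lemma single_1_eq_iff: "single x (1::'k::zero_neq_one) = single y 1 \<longleftrightarrow> x = y"
  by (metis lookup_single_eq lookup_single_not_eq zero_neq_one)

lemma bihom_part_subset_span: "bihom_part i j \<subseteq> bipoly.span (bideg_monomials i j :: 'k::field bipoly set)"
proof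
  fix F :: "'k bipoly" assume F: "F \<in> bihom_part i j"
  have "psmult c (single m 1) = single m c" for c :: 'k and m
    by (rule poly_mapping_eqI) (simp add: lookup_single when_def)
  then have "F = (\<Sum>m\<in>keys F. psmult (lookup F m) (single m 1))"
    by (simp flip: poly_mapping_sum_single)
  also have "\<dots> \<in> bipoly.span (bideg_monomials i j)"
    using F by (intro bipoly.span_sum bipoly.span_scale bipoly.span_base) (auto simp: bideg_monomials_def bihom_part_def)
  finally show "F \<in> bipoly.span (bideg_monomials i j)" .
qed

lemma bihom_part_fin_dim: "bipoly.fin_dim_subspace (bihom_part i j :: 'k::field bipoly set)"
  unfolding bipoly.fin_dim_subspace_def using bihom_part_subset_span[of i j]
  by (intro conjI bihom_part_subspace exI[of _ "bideg_monomials i j"]) (simp_all add: bideg_monomials_def finite_bideg_eq)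

lemma bideg_monomials_independent: "bipoly.independent (bideg_monomials i j :: 'k::field bipoly set)"
  unfolding bipoly.independent_explicit_module
proof (intro allI impI)
  fix t u and v :: "'k bipoly"
  assume t: "finite t" "t \<subseteq> bideg_monomials i j" "(\<Sum>v\<in>t. psmult (u v) v) = 0" "v \<in> t"
  then obtain m where m: "v = single m 1" by (auto simp: bideg_monomials_def)
  have l: "lookup v' m = (if v' = v then 1 else 0)" if "v' \<in> t" for v'
    using that t(2) m by (auto simp: bideg_monomials_def lookup_single when_def single_1_eq_iff)
  have "0 = lookup (\<Sum>v\<in>t. psmult (u v) v) m" using t(3) by simp
  also have "\<dots> = (\<Sum>v'\<in>t. if v' = v then u v' else 0)" by (simp add: lookup_sum) (intro sum.cong, auto simp: l)
  also have "\<dots> = u v" using t(1,4) by simp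
  finally show "u v = 0" by simp
qed

lemma card_bideg_eq:
  assumes "0 \<le> i" "0 \<le> j"
  shows "card {m :: var \<Rightarrow>\<^sub>0 nat. bideg m = (i, j)} = (nat i + 1) * (nat j + 1)"
proof -
  let ?S = "{m :: var \<Rightarrow>\<^sub>0 nat. bideg m = (i, j)}"
  let ?h = "\<lambda>m :: var \<Rightarrow>\<^sub>0 nat. (lookup m X0, lookup m Y0)"
  let ?mk = "\<lambda>p q. single X0 p + single X1 (nat i - p) + single Y0 q + single Y1 (nat j - q) :: var \<Rightarrow>\<^sub>0 nat"
  have "inj_on ?h ?S"
    by (rule inj_onI) (auto intro: var_poly_mapping_eqI simp: bideg_def)
  moreover have "?h ` ?S = {..nat i} \<times> {..nat j}"
  proof
    show "{..nat i} \<times> {..nat j} \<subseteq> ?h ` ?S"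
    proof
      fix x assume "x \<in> {..nat i} \<times> {..nat j}"
      then obtain p q where pq: "x = (p, q)" "p \<le> nat i" "q \<le> nat j" by auto
      then have "bideg (?mk p q) = (i, j)" "?h (?mk p q) = x"
        using assms by (simp_all add: bideg_def lookup_add lookup_single)
      then show "x \<in> ?h ` ?S" by force
    qed
  qed (auto simp: bideg_def)
  ultimately show ?thesis using card_image[of ?h ?S] by (simp add: card_cartesian_product)
qed

lemma dim_bihom_part:
  "bipoly.dim (bihom_part i j :: 'k::field bipoly set) = (if 0 \<le> i \<and> 0 \<le> j then (nat i + 1) * (nat j + 1) else 0)"
proof (cases "0 \<le> i \<and> 0 \<le> j")
  case True
  have "bideg_monomials i j \<subseteq> (bihom_part i j :: 'k bipoly set)"
    by (auto simp: bideg_monomials_def bihom_part_def)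
  then have "card (bideg_monomials i j :: 'k bipoly set) = bipoly.dim (bihom_part i j :: 'k bipoly set)"
    by (rule bipoly.basis_card_eq_dim[OF _ bihom_part_subset_span bideg_monomials_independent])
  moreover have "card (bideg_monomials i j :: 'k bipoly set) = card {m :: var \<Rightarrow>\<^sub>0 nat. bideg m = (i, j)}"
    unfolding bideg_monomials_def by (rule card_image) (auto simp: inj_on_def single_1_eq_iff)
  ultimately show ?thesis using True card_bideg_eq[of i j] by simp
next
  case False
  then have "bihom_part i j = ({0} :: 'k bipoly set)" by (intro bihom_part_neg) auto
  then show ?thesis using False by (simp add: bipoly.dim_singleton_0)
qed

lemma ideal_part_subspace: "is_ideal I \<Longrightarrow> bipoly.subspace (I \<inter> bihom_part i j :: 'k::field bipoly set)"
  unfolding bipoly.subspace_def by (auto intro: is_ideal_0 is_ideal_add is_ideal_psmult bihom_part_add bihom_part_psmult)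

lemma ideal_part_fin_dim: "is_ideal I \<Longrightarrow> bipoly.fin_dim_subspace (I \<inter> bihom_part i j :: 'k::field bipoly set)"
  using bipoly.fin_dim_subspace_subset[OF bihom_part_fin_dim ideal_part_subspace] by blast

lemma int_HF:
  "int (HF (I :: 'k::field bipoly set) i j) = int (bipoly.dim (bihom_part i j :: 'k bipoly set)) - int (bipoly.dim (I \<inter> bihom_part i j))"
  using bipoly.fin_dim_subspace_dim_mono[OF bihom_part_fin_dim, of "I \<inter> bihom_part i j" i j]
  by (simp add: HF_def pdim_def of_nat_diff)

definition form_single :: "var \<Rightarrow> 'k::zero bipoly \<Rightarrow> 'k omega" where
  "form_single u F = (\<lambda>v. if v = u then F else 0)"

definition coeff_forms :: "(var \<Rightarrow> 'k::zero bipoly set) \<Rightarrow> var set \<Rightarrow> 'k omega set" where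
  "coeff_forms V U = {w. \<forall>v. w v \<in> (if v \<in> U then V v else {0})}"

lemma form_single_linear: "Vector_Spaces.linear psmult osmult (form_single u :: 'k::field bipoly \<Rightarrow> 'k omega)"
  unfolding Vector_Spaces.linear_iff using vector_space_psmult vector_space_osmult
  by (auto simp: form_single_def osmult_def fun_eq_iff)

lemma coeff_forms_insert:
  assumes "u \<notin> U" "\<And>v. bipoly.subspace (V v :: 'k::field bipoly set)"
  shows "coeff_forms V (insert u U) = {x + y | x y. x \<in> form_single u ` V u \<and> y \<in> coeff_forms V U}"
    and "form_single u ` V u \<inter> coeff_forms V U = {0}"
proof -
  have coeff: "w \<in> coeff_forms V U' \<longleftrightarrow> (\<forall>v. w v \<in> (if v \<in> U' then V v else {0}))" for w U'
    by (simp add: coeff_forms_def)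
  show "coeff_forms V (insert u U) = {x + y | x y. x \<in> form_single u ` V u \<and> y \<in> coeff_forms V U}"
  proof (intro equalityI subsetI)
    fix w assume w: "w \<in> coeff_forms V (insert u U)"
    have "w = form_single u (w u) + w(u := 0)" by (auto simp: form_single_def fun_eq_iff)
    moreover have "w(u := 0) \<in> coeff_forms V U"
      unfolding coeff
    proof
      fix v show "(w(u := 0)) v \<in> (if v \<in> U then V v else {0})"
        using w[unfolded coeff, rule_format, of v] assms(1) by (cases "v = u") auto
    qed
    moreover have "w u \<in> V u" using w[unfolded coeff, rule_format, of u] by simp
    ultimately show "w \<in> {x + y | x y. x \<in> form_single u ` V u \<and> y \<in> coeff_forms V U}" by blast
  next
    fix w assume "w \<in> {x + y | x y. x \<in> form_single u ` V u \<and> y \<in> coeff_forms V U}"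
    then obtain F y where w: "w = form_single u F + y" "F \<in> V u" "y \<in> coeff_forms V U" by blast
    show "w \<in> coeff_forms V (insert u U)"
      unfolding coeff
    proof
      fix v show "w v \<in> (if v \<in> insert u U then V v else {0})"
        using w(3)[unfolded coeff, rule_format, of v] w(1,2) assms(1) by (cases "v = u") (auto simp: form_single_def)
    qed
  qed
  show "form_single u ` V u \<inter> coeff_forms V U = {0}"
  proof (intro equalityI subsetI)
    fix w assume w: "w \<in> form_single u ` V u \<inter> coeff_forms V U"
    then obtain F where F: "w = form_single u F" by blast
    then have "F = 0" using w[unfolded Int_iff coeff] assms(1) by (auto simp: form_single_def dest: spec[of _ u])
    then show "w \<in> {0}" using F by (simp add: form_single_def fun_eq_iff)
  next
    fix w :: "'k omega" assume "w \<in> {0}"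
    moreover have "form_single u 0 = 0" "\<And>v. 0 \<in> V v" using bipoly.subspace_0[OF assms(2)] by (auto simp: form_single_def fun_eq_iff)
    ultimately show "w \<in> form_single u ` V u \<inter> coeff_forms V U" by (auto simp: coeff_forms_def intro: image_eqI[of _ _ 0])
  qed
qed

lemma coeff_forms_dim:
  fixes V :: "var \<Rightarrow> 'k::field bipoly set"
  assumes "\<And>v. bipoly.fin_dim_subspace (V v)" "finite U"
  shows "omega.fin_dim_subspace (coeff_forms V U) \<and> omega.dim (coeff_forms V U) = (\<Sum>v\<in>U. bipoly.dim (V v))"
  using assms(2)
proof (induction U rule: finite_induct)
  case empty
  have "coeff_forms V {} = {0}" by (auto simp: coeff_forms_def fun_eq_iff)
  then show ?case by (simp add: omega.fin_dim_subspace_singleton_0 omega.dim_singleton_0)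
next
  case (insert u U)
  have sV: "bipoly.subspace (V v)" for v using assms(1) by (simp add: bipoly.fin_dim_subspace_def)
  let ?E = "form_single u ` V u"
  have fE: "omega.fin_dim_subspace ?E" by (rule bipoly_omega.fin_dim_subspace_image[OF form_single_linear assms(1)])
  have dE: "omega.dim ?E = bipoly.dim (V u)"
    by (rule bipoly_omega.dim_image_inj[OF form_single_linear assms(1)]) (drule fun_cong[where x = u], simp add: form_single_def)
  have fW: "omega.fin_dim_subspace (coeff_forms V U)" using insert.IH by simp
  have "omega.dim (coeff_forms V (insert u U)) + 0 = omega.dim ?E + omega.dim (coeff_forms V U)"
    using omega.dim_sums_Int[OF fE fW] coeff_forms_insert[where V = V, OF insert(2) sV] by (simp add: omega.dim_singleton_0)
  moreover have "omega.fin_dim_subspace (coeff_forms V (insert u U))"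
    unfolding coeff_forms_insert(1)[where V = V, OF insert(2) sV] by (rule omega.fin_dim_subspace_sums[OF fE fW])
  ultimately show ?case using insert dE by simp
qed

lemma UNIV_var: "(UNIV :: var set) = {X0, X1, Y0, Y1}"
  using var.exhaust by blast

lemma coeff_forms_UNIV_dim:
  fixes V :: "var \<Rightarrow> 'k::field bipoly set"
  assumes "\<And>v. bipoly.fin_dim_subspace (V v)"
  shows "omega.fin_dim_subspace {w. \<forall>v. w v \<in> V v}"
    and "omega.dim {w. \<forall>v. w v \<in> V v} = bipoly.dim (V X0) + bipoly.dim (V X1) + bipoly.dim (V Y0) + bipoly.dim (V Y1)"
proof -
  have "coeff_forms V UNIV = {w. \<forall>v. w v \<in> V v}" by (simp add: coeff_forms_def)
  moreover have "(\<Sum>v\<in>UNIV. f v) = f X0 + f X1 + f Y0 + f Y1" for f :: "var \<Rightarrow> nat"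
    by (simp add: UNIV_var add.assoc)
  ultimately show "omega.fin_dim_subspace {w. \<forall>v. w v \<in> V v}"
    and "omega.dim {w. \<forall>v. w v \<in> V v} = bipoly.dim (V X0) + bipoly.dim (V X1) + bipoly.dim (V Y0) + bipoly.dim (V Y1)"
    using coeff_forms_dim[where V = V and U = UNIV, OF assms] by (simp_all add: UNIV_var)
qed

lemma omega_part_dim:
  "omega.fin_dim_subspace (omega_part i j :: 'k::field omega set)"
  "omega.dim (omega_part i j :: 'k omega set)
     = 2 * bipoly.dim (bihom_part (i - 1) j :: 'k bipoly set) + 2 * bipoly.dim (bihom_part i (j - 1) :: 'k bipoly set)"
  using coeff_forms_UNIV_dim[of "\<lambda>v. bihom_part (i - fst (vdeg v)) (j - snd (vdeg v)) :: 'k bipoly set", OF bihom_part_fin_dim]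
  by (simp_all add: omega_part_def vdeg_def)

lemma omega_part_trivial: "i < 0 \<or> j < 0 \<or> (i, j) = (0, 0) \<Longrightarrow> omega_part i j = {0}"
proof -
  assume "i < 0 \<or> j < 0 \<or> (i, j) = (0, 0)"
  then have z: "bihom_part (i - fst (vdeg v)) (j - snd (vdeg v)) = {0}" for v
    by (intro bihom_part_neg) (cases v; auto simp: vdeg_def)
  show ?thesis unfolding omega_part_def z by (auto simp: fun_eq_iff)
qed

section \<open>Graded pieces of the module of relations\<close>

definition is_bihom_ideal :: "'k::field bipoly set \<Rightarrow> bool" where
  "is_bihom_ideal I \<longleftrightarrow> is_ideal I \<and> (\<forall>F\<in>I. \<forall>a b. bihom_comp a b F \<in> I)"

lemma fat_ideal_is_bihom_ideal: "is_bihom_ideal (fat_ideal X m)"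
  by (simp add: is_bihom_ideal_def fat_ideal_is_ideal bihom_comp_fat_ideal)

definition omega_comp :: "int \<Rightarrow> int \<Rightarrow> 'k::zero omega \<Rightarrow> 'k omega" where
  "omega_comp i j w = (\<lambda>v. bihom_comp (i - fst (vdeg v)) (j - snd (vdeg v)) (w v))"

text \<open>(I Omega_S)_(i,j), d(I_(i,j)) and their sum, which is the (i,j)-piece of I Omega_S + S dI
  (lemma kahler_rel_Int_omega_part below).\<close>

definition ideal_forms :: "'k::field bipoly set \<Rightarrow> int \<Rightarrow> int \<Rightarrow> 'k omega set" where
  "ideal_forms I i j = {w. \<forall>v. w v \<in> I \<inter> bihom_part (i - fst (vdeg v)) (j - snd (vdeg v))}"

definition exact_forms :: "'k::field bipoly set \<Rightarrow> int \<Rightarrow> int \<Rightarrow> 'k omega set" where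
  "exact_forms I i j = dF ` (I \<inter> bihom_part i j)"

definition kahler_rel_part :: "'k::field bipoly set \<Rightarrow> int \<Rightarrow> int \<Rightarrow> 'k omega set" where
  "kahler_rel_part I i j = {x + y | x y. x \<in> ideal_forms I i j \<and> y \<in> exact_forms I i j}"

definition kahler_gens :: "'k::field bipoly set \<Rightarrow> 'k omega set" where
  "kahler_gens I = {form_single u F | u F. F \<in> I} \<union> {dF F | F. F \<in> I}"

lemma kahler_rel_eq_omod_gen: "kahler_rel I = omod_gen (kahler_gens I)"
  by (simp add: kahler_rel_def kahler_gens_def form_single_def)

lemma omod_gen_base: "g \<in> G \<Longrightarrow> g \<in> omod_gen G"
  unfolding omod_gen_def by (intro CollectI exI[of _ "{g}"] exI[of _ "\<lambda>_. 1"]) auto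

lemma omod_gen_add:
  assumes "a \<in> omod_gen G" "b \<in> omod_gen G"
  shows "a + b \<in> omod_gen G"
proof -
  obtain A c where A: "finite A" "A \<subseteq> G" "a = (\<lambda>v. \<Sum>g\<in>A. c g * g v)" using assms(1) by (auto simp: omod_gen_def)
  obtain B d where B: "finite B" "B \<subseteq> G" "b = (\<lambda>v. \<Sum>g\<in>B. d g * g v)" using assms(2) by (auto simp: omod_gen_def)
  let ?e = "\<lambda>g. (if g \<in> A then c g else 0) + (if g \<in> B then d g else 0)"
  have "(a + b) v = (\<Sum>g\<in>A \<union> B. ?e g * g v)" for v
    using sum_mult_extend[of "A \<union> B" A c "\<lambda>g. g v"] sum_mult_extend[of "A \<union> B" B d "\<lambda>g. g v"] A B
    by (simp add: sum.distrib[symmetric] distrib_right)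
  then show ?thesis unfolding omod_gen_def
    by (intro CollectI exI[of _ "A \<union> B"] exI[of _ ?e]) (use A B in \<open>simp add: fun_eq_iff\<close>)
qed

lemma dF_add: "dF (F + G) = dF F + dF G"
  by (simp add: dF_def fun_eq_iff pderiv_var_add)

lemma dF_linear: "Vector_Spaces.linear psmult osmult (dF :: 'k::field bipoly \<Rightarrow> 'k omega)"
  unfolding Vector_Spaces.linear_iff using vector_space_psmult vector_space_osmult
  by (auto simp: dF_def osmult_def fun_eq_iff pderiv_var_add pderiv_var_psmult)

lemma kahler_rel_part_0: "is_ideal I \<Longrightarrow> 0 \<in> kahler_rel_part I i j"
  unfolding kahler_rel_part_def ideal_forms_def exact_forms_def
  by (intro CollectI exI[of _ 0]) (auto simp: is_ideal_0 dF_def fun_eq_iff intro!: image_eqI[of _ _ 0])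

lemma kahler_rel_part_add:
  assumes I: "is_ideal I" and "a \<in> kahler_rel_part I i j" "b \<in> kahler_rel_part I i j"
  shows "a + b \<in> kahler_rel_part I i j"
proof -
  obtain x1 G1 x2 G2 where "a = x1 + dF G1" "b = x2 + dF G2" "x1 \<in> ideal_forms I i j" "x2 \<in> ideal_forms I i j"
    "G1 \<in> I \<inter> bihom_part i j" "G2 \<in> I \<inter> bihom_part i j"
    using assms(2,3) by (auto simp: kahler_rel_part_def exact_forms_def)
  moreover have "x1 + dF G1 + (x2 + dF G2) = (x1 + x2) + dF (G1 + G2)" by (simp add: dF_add algebra_simps)
  ultimately show ?thesis unfolding kahler_rel_part_def ideal_forms_def exact_forms_def
    by (intro CollectI exI[of _ "x1 + x2"] exI[of _ "dF (G1 + G2)"])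
      (auto intro: is_ideal_add[OF I] bihom_part_add)
qed

lemma ideal_forms_subset_kahler_rel_part: "is_ideal I \<Longrightarrow> ideal_forms I i j \<subseteq> kahler_rel_part I i j"
  unfolding kahler_rel_part_def exact_forms_def
  by (force simp: is_ideal_0 dF_def fun_eq_iff intro: image_eqI[of _ _ 0])

text \<open>By Leibniz' rule, c dF = d(cF) - F dc, and the (i,j)-components of the two terms lie in
  d(I_(i,j)) and in I Omega_S respectively.\<close>

lemma omega_comp_kahler_gen:
  assumes I: "is_bihom_ideal I"
    and g: "g \<in> kahler_gens I"
  shows "omega_comp i j (\<lambda>v. c * g v) \<in> kahler_rel_part I i j"
proof -
  have id: "is_ideal I" and hom: "\<And>F a b. F \<in> I \<Longrightarrow> bihom_comp a b F \<in> I"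
    using I by (simp_all add: is_bihom_ideal_def)
  have comp_in: "bihom_comp a b (c' * F) \<in> I \<inter> bihom_part a b" if "F \<in> I" for a b c' F
    using that by (auto intro!: hom is_ideal_mult[OF id] bihom_comp_in)
  consider u F where "g = form_single u F" "F \<in> I" | F where "g = dF F" "F \<in> I"
    using g by (auto simp: kahler_gens_def)
  then show ?thesis
  proof cases
    case 1
    then have "omega_comp i j (\<lambda>v. c * g v) \<in> ideal_forms I i j"
      using comp_in[of F] is_ideal_0[OF id]
      by (auto simp: ideal_forms_def omega_comp_def form_single_def bihom_comp_mult[OF bihom_part_0] )
    then show ?thesis using ideal_forms_subset_kahler_rel_part[OF id] by blast
  next
    case 2
    let ?x = "\<lambda>v. - bihom_comp (i - fst (vdeg v)) (j - snd (vdeg v)) (pderiv_var v c * F)"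
    let ?G = "bihom_comp i j (c * F)"
    have "c * pderiv_var v F = pderiv_var v (c * F) - pderiv_var v c * F" for v
      by (simp add: pderiv_var_mult)
    then have "omega_comp i j (\<lambda>v. c * g v) = ?x + dF ?G"
      by (simp add: 2 omega_comp_def dF_def fun_eq_iff bihom_comp_diff bihom_comp_pderiv_var)
    moreover have "?x \<in> ideal_forms I i j"
      using comp_in[OF 2(2)] by (auto simp: ideal_forms_def intro: is_ideal_uminus[OF id] bihom_part_uminus)
    moreover have "dF ?G \<in> exact_forms I i j"
      using comp_in[OF 2(2)] by (simp add: exact_forms_def)
    ultimately show ?thesis unfolding kahler_rel_part_def by blast
  qed
qed

lemma omega_comp_omod_gen_sum:
  assumes I: "is_bihom_ideal I" and "finite B" "B \<subseteq> kahler_gens I"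
  shows "omega_comp i j (\<lambda>v. \<Sum>g\<in>B. c g * g v) \<in> kahler_rel_part I i j"
  using assms(2,3)
proof (induction B rule: finite_induct)
  case empty
  have "is_ideal I" using I by (simp add: is_bihom_ideal_def)
  then show ?case using kahler_rel_part_0 by (simp add: omega_comp_def zero_fun_def)
next
  case (insert g B)
  have "omega_comp i j (\<lambda>v. \<Sum>g\<in>insert g B. c g * g v)
      = omega_comp i j (\<lambda>v. c g * g v) + omega_comp i j (\<lambda>v. \<Sum>g\<in>B. c g * g v)"
    using insert(1,2) by (simp add: omega_comp_def fun_eq_iff bihom_comp_add)
  moreover have "g \<in> kahler_gens I" "B \<subseteq> kahler_gens I" using insert.prems by auto
  ultimately show ?case using I
    by (simp only:) (intro kahler_rel_part_add omega_comp_kahler_gen insert.IH, simp_all add: is_bihom_ideal_def)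
qed

lemma kahler_rel_part_subset:
  assumes "is_ideal I"
  shows "kahler_rel_part I i j \<subseteq> kahler_rel I \<inter> omega_part i j"
proof
  fix w assume "w \<in> kahler_rel_part I i j"
  then obtain x G where xG: "w = x + dF G" "x \<in> ideal_forms I i j" "G \<in> I \<inter> bihom_part i j"
    by (auto simp: kahler_rel_part_def exact_forms_def)
  have xv: "x v \<in> I \<inter> bihom_part (i - fst (vdeg v)) (j - snd (vdeg v))" for v
    using xG(2) by (simp add: ideal_forms_def)
  have x: "x = form_single X0 (x X0) + form_single X1 (x X1) + form_single Y0 (x Y0) + form_single Y1 (x Y1)"
    by (rule ext, case_tac xa) (simp_all add: form_single_def)
  have "form_single u (x u) \<in> omod_gen (kahler_gens I)" for u
    using xv[of u] by (intro omod_gen_base) (auto simp: kahler_gens_def)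
  then have "x \<in> omod_gen (kahler_gens I)" by (subst x) (intro omod_gen_add)
  moreover have "dF G \<in> omod_gen (kahler_gens I)" using xG(3) by (intro omod_gen_base) (auto simp: kahler_gens_def)
  ultimately have "w \<in> kahler_rel I" unfolding xG(1) kahler_rel_eq_omod_gen by (rule omod_gen_add)
  moreover have "w \<in> omega_part i j" unfolding omega_part_def xG(1)
    using xv xG(3) by (auto simp: dF_def intro: bihom_part_add bihom_part_pderiv_var)
  ultimately show "w \<in> kahler_rel I \<inter> omega_part i j" by simp
qed

lemma kahler_rel_Int_omega_part:
  assumes I: "is_bihom_ideal I"
  shows "kahler_rel I \<inter> omega_part i j = kahler_rel_part I i j"
proof
  show "kahler_rel I \<inter> omega_part i j \<subseteq> kahler_rel_part I i j"
  proof
    fix w assume w: "w \<in> kahler_rel I \<inter> omega_part i j"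
    then obtain A c where A: "finite A" "A \<subseteq> kahler_gens I" "w = (\<lambda>v. \<Sum>g\<in>A. c g * g v)"
      by (auto simp: kahler_rel_eq_omod_gen omod_gen_def)
    have "omega_comp i j w = w" using w by (auto simp: omega_part_def omega_comp_def fun_eq_iff bihom_comp_id)
    then show "w \<in> kahler_rel_part I i j" using omega_comp_omod_gen_sum[OF I A(1,2), of i j c] A(3) by simp
  qed
  show "kahler_rel_part I i j \<subseteq> kahler_rel I \<inter> omega_part i j"
    using I by (intro kahler_rel_part_subset) (simp add: is_bihom_ideal_def)
qed

lemma HF_Omega_eq:
  fixes I :: "'k::field bipoly set"
  assumes "is_bihom_ideal I"
  shows "int (HF_Omega I i j) = int (omega.dim (omega_part i j :: 'k omega set)) - int (omega.dim (kahler_rel_part I i j))"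
proof -
  have "kahler_rel_part I i j \<subseteq> omega_part i j" using kahler_rel_Int_omega_part[OF assms] by blast
  then have "omega.dim (kahler_rel_part I i j) \<le> omega.dim (omega_part i j :: 'k omega set)"
    by (rule omega.fin_dim_subspace_dim_mono[OF omega_part_dim(1)])
  then show ?thesis using kahler_rel_Int_omega_part[OF assms] by (simp add: HF_Omega_def odim_def of_nat_diff)
qed

lemma dF_eq_0_imp_eq_0:
  assumes "G \<in> bihom_part i j" "i \<noteq> 0" "dF G = (0 :: 'k::field_char_0 omega)"
  shows "G = 0"
proof (rule poly_mapping_eqI)
  fix n
  have "psmult (of_int i) G = 0" using euler_X[OF assms(1)] assms(3) by (simp add: euler_op_def dF_def fun_eq_iff)
  then have "of_int i * lookup G n = 0" by (metis lookup_psmult lookup_zero)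
  then show "lookup G n = lookup 0 n" using assms(2) by simp
qed

lemma ideal_forms_dim:
  assumes "is_ideal (I :: 'k::field bipoly set)"
  shows "omega.fin_dim_subspace (ideal_forms I i j)"
    and "omega.dim (ideal_forms I i j) = 2 * bipoly.dim (I \<inter> bihom_part (i - 1) j) + 2 * bipoly.dim (I \<inter> bihom_part i (j - 1))"
  using coeff_forms_UNIV_dim[of "\<lambda>v. I \<inter> bihom_part (i - fst (vdeg v)) (j - snd (vdeg v))", OF ideal_part_fin_dim[OF assms]]
  by (simp_all add: ideal_forms_def vdeg_def)

lemma dF_image_dim:
  assumes "is_ideal (I :: 'k::field_char_0 bipoly set)" "i \<noteq> 0"
  shows "omega.fin_dim_subspace (dF ` (I \<inter> bihom_part i j))"
    and "omega.dim (dF ` (I \<inter> bihom_part i j)) = bipoly.dim (I \<inter> bihom_part i j)"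
proof -
  show "omega.fin_dim_subspace (dF ` (I \<inter> bihom_part i j))"
    by (rule bipoly_omega.fin_dim_subspace_image[OF dF_linear ideal_part_fin_dim[OF assms(1)]])
  show "omega.dim (dF ` (I \<inter> bihom_part i j)) = bipoly.dim (I \<inter> bihom_part i j)"
    by (rule bipoly_omega.dim_image_inj[OF dF_linear ideal_part_fin_dim[OF assms(1)]])
      (use dF_eq_0_imp_eq_0 assms(2) in blast)
qed

lemma fat_ideal_Suc_iff:
  fixes X :: "'k::field_char_0 pt set"
  assumes "\<forall>P\<in>X. valid_pt P" "\<forall>P\<in>X. 0 < m P" "G \<in> bihom_part i j"
  shows "G \<in> fat_ideal X (\<lambda>P. m P + 1) \<longleftrightarrow> G \<in> fat_ideal X m \<and> (\<forall>v. pderiv_var v G \<in> fat_ideal X m)"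
  using ideal_pow_Suc_iff_pderiv[OF _ assms(3)] assms(1,2) by (auto simp: fat_ideal_def)

text \<open>dG lies in I Omega_S iff all partial derivatives of G lie in I, that is, iff G lies in the
  ideal of the thickening V.\<close>

lemma ideal_forms_Int_exact_forms:
  fixes X :: "'k::field_char_0 pt set"
  assumes "\<forall>P\<in>X. valid_pt P" "\<forall>P\<in>X. 0 < m P"
  shows "ideal_forms (fat_ideal X m) i j \<inter> exact_forms (fat_ideal X m) i j = dF ` (fat_ideal X (\<lambda>P. m P + 1) \<inter> bihom_part i j)"
proof (intro equalityI subsetI)
  fix w assume w: "w \<in> ideal_forms (fat_ideal X m) i j \<inter> exact_forms (fat_ideal X m) i j"
  then obtain G where G: "w = dF G" "G \<in> fat_ideal X m" "G \<in> bihom_part i j" by (auto simp: exact_forms_def)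
  then have "pderiv_var v G \<in> fat_ideal X m" for v using w by (auto simp: ideal_forms_def dF_def)
  then show "w \<in> dF ` (fat_ideal X (\<lambda>P. m P + 1) \<inter> bihom_part i j)"
    using G fat_ideal_Suc_iff[OF assms G(3)] by auto
next
  fix w assume "w \<in> dF ` (fat_ideal X (\<lambda>P. m P + 1) \<inter> bihom_part i j)"
  then obtain G where G: "w = dF G" "G \<in> fat_ideal X (\<lambda>P. m P + 1)" "G \<in> bihom_part i j" by auto
  then show "w \<in> ideal_forms (fat_ideal X m) i j \<inter> exact_forms (fat_ideal X m) i j"
    using fat_ideal_Suc_iff[OF assms G(3)] bihom_part_pderiv_var[OF G(3)]
    by (auto simp: ideal_forms_def exact_forms_def dF_def)
qed

lemma HF_Omega_fat_ideal:
  fixes X :: "'k::field_char_0 pt set"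
  assumes "\<forall>P\<in>X. valid_pt P" "\<forall>P\<in>X. 0 < m P" "1 \<le> i"
  shows "int (HF_Omega (fat_ideal X m) i j)
    = 2 * int (HF (fat_ideal X m) (i - 1) j) + 2 * int (HF (fat_ideal X m) i (j - 1))
      + int (HF (fat_ideal X m) i j) - int (HF (fat_ideal X (\<lambda>P. m P + 1)) i j)"
proof -
  let ?I = "fat_ideal X m" and ?V = "fat_ideal X (\<lambda>P. m P + 1)"
  have I: "is_ideal ?I" "is_ideal ?V" by (rule fat_ideal_is_ideal)+
  have i: "i \<noteq> 0" using assms(3) by simp
  have "omega.fin_dim_subspace (exact_forms ?I i j)"
    unfolding exact_forms_def by (rule dF_image_dim(1)[OF I(1) i])
  then have "omega.dim (kahler_rel_part ?I i j) + omega.dim (ideal_forms ?I i j \<inter> exact_forms ?I i j)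
      = omega.dim (ideal_forms ?I i j) + omega.dim (exact_forms ?I i j)"
    unfolding kahler_rel_part_def by (rule omega.dim_sums_Int[OF ideal_forms_dim(1)[OF I(1)]])
  moreover have "omega.dim (ideal_forms ?I i j \<inter> exact_forms ?I i j) = bipoly.dim (?V \<inter> bihom_part i j)"
    unfolding ideal_forms_Int_exact_forms[OF assms(1,2)] by (rule dF_image_dim(2)[OF I(2) i])
  moreover have "omega.dim (exact_forms ?I i j) = bipoly.dim (?I \<inter> bihom_part i j)"
    unfolding exact_forms_def by (rule dF_image_dim(2)[OF I(1) i])
  ultimately have "omega.dim (kahler_rel_part ?I i j) + bipoly.dim (?V \<inter> bihom_part i j)
      = 2 * bipoly.dim (?I \<inter> bihom_part (i - 1) j) + 2 * bipoly.dim (?I \<inter> bihom_part i (j - 1))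
        + bipoly.dim (?I \<inter> bihom_part i j)"
    using ideal_forms_dim(2)[OF I(1)] by simp
  from arg_cong[OF this, of int] have "int (omega.dim (kahler_rel_part ?I i j)) + int (bipoly.dim (?V \<inter> bihom_part i j))
      = 2 * int (bipoly.dim (?I \<inter> bihom_part (i - 1) j)) + 2 * int (bipoly.dim (?I \<inter> bihom_part i (j - 1)))
        + int (bipoly.dim (?I \<inter> bihom_part i j))"
    by simp
  moreover have "int (omega.dim (omega_part i j :: 'k omega set))
      = 2 * int (bipoly.dim (bihom_part (i - 1) j :: 'k bipoly set)) + 2 * int (bipoly.dim (bihom_part i (j - 1) :: 'k bipoly set))"
    by (simp add: omega_part_dim(2))
  ultimately show ?thesis
    using HF_Omega_eq[OF fat_ideal_is_bihom_ideal, of X m i j]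
      int_HF[of ?I "i - 1" j] int_HF[of ?I i "j - 1"] int_HF[of ?I i j] int_HF[of ?V i j]
    by linarith
qed

lemma HF_Omega_of_zero_part:
  fixes I :: "'k::field bipoly set"
  assumes I: "is_bihom_ideal I" and zero: "I \<inter> bihom_part i j = {0}"
  shows "HF_Omega I i j = omega.dim (omega_part i j :: 'k omega set)"
proof -
  have id: "is_ideal I" using I by (simp add: is_bihom_ideal_def)
  have coeff_0: "F = 0" if "F \<in> I \<inter> bihom_part (i - fst (vdeg v)) (j - snd (vdeg v))" for F v
  proof -
    have "pvar v * F \<in> I \<inter> bihom_part i j"
      using that is_ideal_mult[OF id, of F "pvar v"]
        bihom_part_mult[OF pvar_bihom_part[of v], of F "i - fst (vdeg v)" "j - snd (vdeg v)"] by auto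
    then show "F = 0" using zero pvar_mult_eq_0_iff by auto
  qed
  have "ideal_forms I i j = {0}"
  proof (intro equalityI subsetI)
    fix w assume "w \<in> ideal_forms I i j"
    then have "w v = 0" for v using coeff_0[of "w v" v] by (simp add: ideal_forms_def)
    then show "w \<in> {0}" by (simp add: fun_eq_iff)
  qed (use is_ideal_0[OF id] in \<open>simp add: ideal_forms_def\<close>)
  moreover have "exact_forms I i j = {0}" using zero by (simp add: exact_forms_def dF_def fun_eq_iff zero_fun_def)
  ultimately have "kahler_rel_part I i j = {0}" by (simp add: kahler_rel_part_def)
  then show ?thesis using HF_Omega_eq[OF I, of i j] by (simp add: omega.dim_singleton_0)
qed

section \<open>Stabilisation of the Hilbert function\<close>

lemma ex_scalar_avoiding:
  fixes f g :: "'a \<Rightarrow> 'k::field_char_0"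
  assumes "finite X" "\<forall>P\<in>X. (f P, g P) \<noteq> (0, 0)"
  shows "\<exists>t. \<forall>P\<in>X. f P + t * g P \<noteq> 0"
proof -
  have "finite {k::nat. f P + of_nat k * g P = 0}" if "P \<in> X" for P
  proof (cases "g P = 0")
    case False
    have "of_nat k = - f P / g P" if "f P + of_nat k * g P = 0" for k :: nat
    proof -
      have "of_nat k * g P = - f P" using that by (simp add: add_eq_0_iff)
      then show ?thesis using False by (simp add: field_simps)
    qed
    then have "{k::nat. f P + of_nat k * g P = 0} \<subseteq> of_nat -` {- f P / g P}" by auto
    moreover have "finite (of_nat -` {- f P / g P} :: nat set)"
      by (rule finite_vimageI) (simp_all add: inj_of_nat)
    ultimately show ?thesis by (rule finite_subset)
  qed (use assms(2) that in auto)
  then have "finite (\<Union>P\<in>X. {k::nat. f P + of_nat k * g P = 0})" using assms(1) by blast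
  then obtain k where "k \<notin> (\<Union>P\<in>X. {k::nat. f P + of_nat k * g P = 0})"
    using ex_new_if_finite[OF infinite_UNIV_nat] by blast
  then show ?thesis by (intro exI[of _ "of_nat k"]) auto
qed

definition lin_form :: "var \<Rightarrow> var \<Rightarrow> 'k::field \<Rightarrow> 'k bipoly" where
  "lin_form u0 u1 t = pvar u0 + psmult t (pvar u1)"

lemma peval_lin_form: "peval (lin_form u0 u1 t) P = coord P u0 + t * coord P u1"
  by (simp add: lin_form_def peval_add peval_psmult peval_pvar)

lemma lin_form_bihom_part: "lin_form X0 X1 t \<in> bihom_part 1 0" "lin_form Y0 Y1 t \<in> bihom_part 0 1"
  unfolding lin_form_def using pvar_bihom_part[of X0] pvar_bihom_part[of X1] pvar_bihom_part[of Y0] pvar_bihom_part[of Y1]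
  by (auto intro!: bihom_part_add bihom_part_psmult simp: vdeg_def)

text \<open>Linear forms are non-zero-divisors: compare the coefficients of a monomial of maximal degree in u0.\<close>

lemma lin_form_mult_eq_0:
  assumes "u0 \<noteq> u1" "lin_form u0 u1 t * F = (0 :: 'k::field bipoly)"
  shows "F = 0"
proof (rule ccontr)
  assume "F \<noteq> 0"
  let ?M = "Max ((\<lambda>n. lookup n u0) ` keys F)"
  have "?M \<in> (\<lambda>n. lookup n u0) ` keys F" using \<open>F \<noteq> 0\<close> by (intro Max_in) simp_all
  then obtain n where n: "n \<in> keys F" "lookup n u0 = ?M" by auto
  have max: "lookup n' u0 \<le> lookup n u0" if "n' \<in> keys F" for n' using n(2) that by simp
  have "lookup (pvar u1 * F) (n + var_exp u0) = 0"
  proof (cases "1 \<le> lookup (n + var_exp u0) u1")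
    case True
    have "lookup (n + var_exp u0 - var_exp u1) u0 = lookup n u0 + 1"
      using assms(1) by (simp add: lookup_minus lookup_add lookup_var_exp)
    then have "n + var_exp u0 - var_exp u1 \<notin> keys F" using max by fastforce
    then show ?thesis using True by (simp add: lookup_pvar_mult in_keys_iff)
  qed (simp add: lookup_pvar_mult)
  moreover have "lin_form u0 u1 t * F = pvar u0 * F + psmult t (pvar u1 * F)"
    by (simp add: lin_form_def distrib_right psmult_eq_mult mult.assoc)
  ultimately have "lookup (lin_form u0 u1 t * F) (n + var_exp u0) = lookup F n"
    by (simp add: lookup_add lookup_pvar_mult lookup_var_exp)
  then show False using assms(2) n(1) by (simp add: in_keys_iff)
qed

lemma mult_linear: "Vector_Spaces.linear psmult psmult (\<lambda>F. (L :: 'k::field bipoly) * F)"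
  unfolding Vector_Spaces.linear_iff using vector_space_psmult
  by (auto simp: distrib_left psmult_eq_mult mult.left_commute)

lemma dim_image_mult:
  fixes L :: "'k::field bipoly"
  assumes "\<And>F. L * F = 0 \<Longrightarrow> F = 0" "bipoly.fin_dim_subspace V"
  shows "bipoly.dim ((\<lambda>F. L * F) ` V) = bipoly.dim V"
  using bipoly_pair.dim_image_inj[OF mult_linear assms(2)] assms(1) by blast

definition mult_plus_ideal :: "'k::field bipoly \<Rightarrow> 'k bipoly set \<Rightarrow> int \<Rightarrow> int \<Rightarrow> int \<Rightarrow> int \<Rightarrow> 'k bipoly set" where
  "mult_plus_ideal L I a b i j = {x + y | x y. x \<in> (\<lambda>F. L * F) ` bihom_part (i - a) (j - b) \<and> y \<in> I \<inter> bihom_part i j}"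

text \<open>Multiplication by L maps (S/I)_(i-a,j-b) onto (S/I)_(i,j).\<close>

definition mult_onto_mod :: "'k::field bipoly \<Rightarrow> 'k bipoly set \<Rightarrow> int \<Rightarrow> int \<Rightarrow> int \<Rightarrow> int \<Rightarrow> bool" where
  "mult_onto_mod L I a b i j \<longleftrightarrow> bihom_part i j \<subseteq> mult_plus_ideal L I a b i j"

lemma mult_plus_ideal_add:
  assumes I: "is_ideal I" and "x \<in> mult_plus_ideal L I a b i j" "y \<in> mult_plus_ideal L I a b i j"
  shows "x + y \<in> mult_plus_ideal L I a b i j"
proof -
  obtain F1 H1 F2 H2 where "x = L * F1 + H1" "y = L * F2 + H2"
    "F1 \<in> bihom_part (i - a) (j - b)" "F2 \<in> bihom_part (i - a) (j - b)"
    "H1 \<in> I \<inter> bihom_part i j" "H2 \<in> I \<inter> bihom_part i j" using assms(2,3) by (auto simp: mult_plus_ideal_def)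
  moreover have "L * F1 + H1 + (L * F2 + H2) = L * (F1 + F2) + (H1 + H2)" by (simp add: algebra_simps)
  ultimately show ?thesis unfolding mult_plus_ideal_def
    by (intro CollectI exI[of _ "L * (F1 + F2)"] exI[of _ "H1 + H2"]) (auto intro: bihom_part_add is_ideal_add[OF I])
qed

lemma mult_plus_ideal_mult:
  assumes I: "is_ideal I" and N: "N \<in> bihom_part c d" and x: "x \<in> mult_plus_ideal L I a b i j"
  shows "N * x \<in> mult_plus_ideal L I a b (i + c) (j + d)"
proof -
  obtain F H where FH: "x = L * F + H" "F \<in> bihom_part (i - a) (j - b)" "H \<in> I \<inter> bihom_part i j"
    using x by (auto simp: mult_plus_ideal_def)
  have "N * x = L * (N * F) + N * H" unfolding FH(1) by (simp add: algebra_simps)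
  moreover have "N * F \<in> bihom_part (i + c - a) (j + d - b)"
    using bihom_part_mult[OF N FH(2)] by (simp add: algebra_simps)
  moreover have "N * H \<in> I \<inter> bihom_part (i + c) (j + d)"
    using bihom_part_mult[OF N, of H i j] FH(3) is_ideal_mult[OF I] by (auto simp: algebra_simps)
  ultimately show ?thesis unfolding mult_plus_ideal_def by blast
qed

lemma mult_image_Int_fat_ideal:
  fixes X :: "'k::field_char_0 pt set"
  assumes "\<forall>P\<in>X. valid_pt P" "L \<in> bihom_part a b" "\<forall>P\<in>X. peval L P \<noteq> 0"
  shows "(\<lambda>F. L * F) ` bihom_part (i - a) (j - b) \<inter> (fat_ideal X m \<inter> bihom_part i j)
    = (\<lambda>F. L * F) ` (fat_ideal X m \<inter> bihom_part (i - a) (j - b))"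
proof (intro equalityI subsetI)
  fix x assume "x \<in> (\<lambda>F. L * F) ` bihom_part (i - a) (j - b) \<inter> (fat_ideal X m \<inter> bihom_part i j)"
  then obtain F where F: "x = L * F" "F \<in> bihom_part (i - a) (j - b)" "L * F \<in> fat_ideal X m" by auto
  have "F \<in> ideal_pow (pt_ideal P) (m P)" if "P \<in> X" for P
    using ideal_pow_cancel[of P L F "i - a" "j - b" "m P"] assms(1,3) F(2,3) that by (auto simp: fat_ideal_def)
  then show "x \<in> (\<lambda>F. L * F) ` (fat_ideal X m \<inter> bihom_part (i - a) (j - b))" using F by (auto simp: fat_ideal_def)
next
  fix x assume "x \<in> (\<lambda>F. L * F) ` (fat_ideal X m \<inter> bihom_part (i - a) (j - b))"
  then show "x \<in> (\<lambda>F. L * F) ` bihom_part (i - a) (j - b) \<inter> (fat_ideal X m \<inter> bihom_part i j)"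
    using bihom_part_mult[OF assms(2), of _ "i - a" "j - b"] is_ideal_mult[OF fat_ideal_is_ideal] by auto
qed

text \<open>Multiplication by L is injective on S/I, so the Hilbert function does not increase along L
  exactly when this multiplication is onto.\<close>

lemma HF_eq_iff_mult_onto_mod:
  fixes X :: "'k::field_char_0 pt set"
  assumes "\<forall>P\<in>X. valid_pt P" and L: "L \<in> bihom_part a b"
    and nonvanishing: "\<forall>P\<in>X. peval L P \<noteq> 0" and nzd: "\<And>F. L * F = 0 \<Longrightarrow> F = 0"
  shows "HF (fat_ideal X m) (i - a) (j - b) = HF (fat_ideal X m) i j \<longleftrightarrow> mult_onto_mod L (fat_ideal X m) a b i j"
proof -
  let ?I = "fat_ideal X m" and ?S' = "bihom_part (i - a) (j - b) :: 'k bipoly set"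
  let ?A = "(\<lambda>F. L * F) ` ?S'" and ?B = "?I \<inter> bihom_part i j"
  have I: "is_ideal ?I" by (rule fat_ideal_is_ideal)
  have fA: "bipoly.fin_dim_subspace ?A" by (rule bipoly_pair.fin_dim_subspace_image[OF mult_linear bihom_part_fin_dim])
  have dA: "bipoly.dim ?A = bipoly.dim ?S'"
    by (rule dim_image_mult[OF nzd bihom_part_fin_dim])
  have dAB: "bipoly.dim (?A \<inter> ?B) = bipoly.dim (?I \<inter> ?S')"
    unfolding mult_image_Int_fat_ideal[OF assms(1) L nonvanishing] by (rule dim_image_mult[OF nzd ideal_part_fin_dim[OF I]])
  have sub: "mult_plus_ideal L ?I a b i j \<subseteq> bihom_part i j"
    unfolding mult_plus_ideal_def using bihom_part_mult[OF L] by (force intro: bihom_part_add)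
  have "bipoly.dim (mult_plus_ideal L ?I a b i j) + bipoly.dim (?A \<inter> ?B) = bipoly.dim ?A + bipoly.dim ?B"
    unfolding mult_plus_ideal_def by (rule bipoly.dim_sums_Int[OF fA ideal_part_fin_dim[OF I]])
  from arg_cong[OF this, of int] have "int (bipoly.dim (mult_plus_ideal L ?I a b i j)) = int (HF ?I (i - a) (j - b)) + int (bipoly.dim ?B)"
    using dAB dA int_HF[of ?I "i - a" "j - b"] by simp
  then have "HF ?I (i - a) (j - b) = HF ?I i j
      \<longleftrightarrow> bipoly.dim (mult_plus_ideal L ?I a b i j) = bipoly.dim (bihom_part i j :: 'k bipoly set)"
    using int_HF[of ?I i j] by linarith
  also have "\<dots> \<longleftrightarrow> mult_plus_ideal L ?I a b i j = bihom_part i j"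
  proof -
    have "bipoly.subspace (mult_plus_ideal L ?I a b i j)"
      unfolding mult_plus_ideal_def using fA ideal_part_fin_dim[OF I]
      by (intro bipoly.subspace_sums) (auto simp: bipoly.fin_dim_subspace_def)
    then show ?thesis using bipoly.fin_dim_subspace_dim_eq[OF bihom_part_fin_dim _ sub] by auto
  qed
  finally show ?thesis using sub unfolding mult_onto_mod_def by auto
qed

lemma mult_onto_mod_by_split:
  fixes L N N' :: "'k::field bipoly"
  assumes I: "is_ideal I" and onto: "mult_onto_mod L I a b i j"
    and split: "\<And>F. F \<in> bihom_part (i + c) (j + d) \<Longrightarrow> \<exists>F0 F1. F0 \<in> bihom_part i j \<and> F1 \<in> bihom_part i j \<and> F = N * F0 + N' * F1"
    and N: "N \<in> bihom_part c d" "N' \<in> bihom_part c d"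
  shows "mult_onto_mod L I a b (i + c) (j + d)"
  unfolding mult_onto_mod_def
proof
  fix F :: "'k bipoly" assume "F \<in> bihom_part (i + c) (j + d)"
  then obtain F0 F1 where F: "F0 \<in> bihom_part i j" "F1 \<in> bihom_part i j" "F = N * F0 + N' * F1"
    using split by blast
  then show "F \<in> mult_plus_ideal L I a b (i + c) (j + d)"
    using onto N by (auto simp: mult_onto_mod_def intro!: mult_plus_ideal_add[OF I] mult_plus_ideal_mult[OF I])
qed

lemma split_by_euler_op:
  assumes "euler_op u0 u1 F = psmult c F" "c \<noteq> 0" "pderiv_var u0 F \<in> bihom_part i j" "pderiv_var u1 F \<in> bihom_part i j"
  shows "\<exists>F0 F1. F0 \<in> bihom_part i j \<and> F1 \<in> bihom_part i j \<and> F = pvar u0 * F0 + pvar u1 * F1"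
  using euler_op_split[OF assms(1,2)] assms(3,4) bihom_part_psmult by blast

lemma of_nat_add_1_neq_0: "(of_nat i + 1 :: 'k::field_char_0) \<noteq> 0"
  using of_nat_neq_0[of i, where 'a='k] by (simp add: add.commute)

lemma mult_onto_mod_Suc_X:
  assumes "is_ideal (I :: 'k::field_char_0 bipoly set)" "mult_onto_mod L I a b (int i) (int j)"
  shows "mult_onto_mod L I a b (int (Suc i)) (int j)"
proof -
  have "\<exists>F0 F1. F0 \<in> bihom_part (int i) (int j) \<and> F1 \<in> bihom_part (int i) (int j) \<and> F = pvar X0 * F0 + pvar X1 * F1"
    if "F \<in> bihom_part (int i + 1) (int j + 0)" for F :: "'k bipoly"
    using split_by_euler_op[OF euler_X[OF that]] of_nat_add_1_neq_0[of i]
      bihom_part_pderiv_var[OF that, of X0] bihom_part_pderiv_var[OF that, of X1] by (simp add: vdeg_def)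
  from mult_onto_mod_by_split[where c = 1 and d = 0 and N = "pvar X0" and N' = "pvar X1", OF assms this]
  show ?thesis using pvar_bihom_part[of X0] pvar_bihom_part[of X1] by (simp add: vdeg_def add.commute)
qed

lemma mult_onto_mod_Suc_Y:
  assumes "is_ideal (I :: 'k::field_char_0 bipoly set)" "mult_onto_mod L I a b (int i) (int j)"
  shows "mult_onto_mod L I a b (int i) (int (Suc j))"
proof -
  have "\<exists>F0 F1. F0 \<in> bihom_part (int i) (int j) \<and> F1 \<in> bihom_part (int i) (int j) \<and> F = pvar Y0 * F0 + pvar Y1 * F1"
    if "F \<in> bihom_part (int i + 0) (int j + 1)" for F :: "'k bipoly"
    using split_by_euler_op[OF euler_Y[OF that]] of_nat_add_1_neq_0[of j]
      bihom_part_pderiv_var[OF that, of Y0] bihom_part_pderiv_var[OF that, of Y1] by (simp add: vdeg_def)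
  from mult_onto_mod_by_split[where c = 0 and d = 1 and N = "pvar Y0" and N' = "pvar Y1", OF assms this]
  show ?thesis using pvar_bihom_part[of Y0] pvar_bihom_part[of Y1] by (simp add: vdeg_def add.commute)
qed

lemma mult_onto_mod_cross:
  fixes L M :: "'k::field bipoly"
  assumes I: "is_ideal I" and onto: "mult_onto_mod L I a b i j" "mult_onto_mod M I c d (i + c) (j + d)"
    and M: "M \<in> bihom_part c d"
  shows "mult_onto_mod L I a b (i + c) (j + d)"
  unfolding mult_onto_mod_def
proof
  fix F :: "'k bipoly" assume "F \<in> bihom_part (i + c) (j + d)"
  then obtain G H where GH: "F = M * G + H" "G \<in> bihom_part i j" "H \<in> I \<inter> bihom_part (i + c) (j + d)"
    using onto(2) by (auto simp: mult_onto_mod_def mult_plus_ideal_def)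
  have "M * G \<in> mult_plus_ideal L I a b (i + c) (j + d)"
    using mult_plus_ideal_mult[OF I M, of G] onto(1) GH(2) by (auto simp: mult_onto_mod_def)
  moreover have "H \<in> mult_plus_ideal L I a b (i + c) (j + d)"
    unfolding mult_plus_ideal_def using GH(3) by (intro CollectI exI[of _ 0] exI[of _ H]) (auto intro: image_eqI[of _ _ 0])
  ultimately show "F \<in> mult_plus_ideal L I a b (i + c) (j + d)" unfolding GH(1) by (rule mult_plus_ideal_add[OF I])
qed

lemma mult_onto_mod_propagate:
  fixes I :: "'k::field_char_0 bipoly set"
  assumes I: "is_ideal I" and L: "L \<in> bihom_part 1 0" and M: "M \<in> bihom_part 0 1"
    and start: "mult_onto_mod L I 1 0 (int i0) (int j0)" "mult_onto_mod M I 0 1 (int i0) (int j0)"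
    and "i0 \<le> i" "j0 \<le> j"
  shows "mult_onto_mod L I 1 0 (int i) (int j) \<and> mult_onto_mod M I 0 1 (int i) (int j)"
proof -
  let ?both = "\<lambda>i j. mult_onto_mod L I 1 0 (int i) (int j) \<and> mult_onto_mod M I 0 1 (int i) (int j)"
  have step_i: "?both (Suc i) j" if "?both i j" for i j
  proof -
    have row: "mult_onto_mod L I 1 0 (int i + 1) (int j + 0)"
      using mult_onto_mod_Suc_X[OF I, of L 1 0 i j] that by (simp add: add.commute)
    then have "mult_onto_mod M I 0 1 (int i + 1) (int j + 0)"
      using mult_onto_mod_cross[OF I _ row L] that by blast
    with row show ?thesis by (simp add: add.commute)
  qed
  have step_j: "?both i (Suc j)" if "?both i j" for i j
  proof -
    have col: "mult_onto_mod M I 0 1 (int i + 0) (int j + 1)"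
      using mult_onto_mod_Suc_Y[OF I, of M 0 1 i j] that by (simp add: add.commute)
    then have "mult_onto_mod L I 1 0 (int i + 0) (int j + 1)"
      using mult_onto_mod_cross[OF I _ col M] that by blast
    with col show ?thesis by (simp add: add.commute)
  qed
  have "?both i0 j'" if "j0 \<le> j'" for j'
    using that by (induction j' rule: dec_induct) (use start step_j in auto)
  then have base: "?both i0 j" using \<open>j0 \<le> j\<close> by blast
  have "?both i' j" if "i0 \<le> i'" for i'
    using that by (induction i' rule: dec_induct) (use base step_i in auto)
  then show ?thesis using \<open>i0 \<le> i\<close> by blast
qed

lemma HF_neg: "i < 0 \<or> j < 0 \<Longrightarrow> HF I i j = 0"
  by (simp add: HF_def pdim_def bihom_part_neg bipoly.dim_singleton_0)

lemma HF_UNIV: "HF UNIV i j = 0"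
  by (simp add: HF_def)

text \<open>Choose linear forms L and M of bidegrees (1,0) and (0,1) vanishing at no point of the support:
  stationarity at (i,j) means that multiplication by L and by M is onto, and this propagates.\<close>

lemma HF_fat_ideal_stable:
  fixes X :: "'k::field_char_0 pt set"
  assumes "finite X" "\<forall>P\<in>X. valid_pt P"
    and "HF (fat_ideal X m) (int i0 - 1) (int j0) = HF (fat_ideal X m) (int i0) (int j0)"
    and "HF (fat_ideal X m) (int i0) (int j0 - 1) = HF (fat_ideal X m) (int i0) (int j0)"
    and "i0 \<le> i" "j0 \<le> j"
  shows "HF (fat_ideal X m) (int i - 1) (int j) = HF (fat_ideal X m) (int i) (int j)"
    and "HF (fat_ideal X m) (int i) (int j - 1) = HF (fat_ideal X m) (int i) (int j)"
proof -
  let ?I = "fat_ideal X m"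
  have coords: "\<forall>P\<in>X. (coord P u0, coord P u1) \<noteq> (0, 0)" if "(u0, u1) \<in> factor_vars" for u0 u1
    using valid_pt_factor_coords that assms(2) by blast
  obtain t where t: "\<forall>P\<in>X. coord P X0 + t * coord P X1 \<noteq> 0"
    using ex_scalar_avoiding[OF assms(1) coords[of X0 X1]] by (auto simp: factor_vars_def)
  obtain s where s: "\<forall>P\<in>X. coord P Y0 + s * coord P Y1 \<noteq> 0"
    using ex_scalar_avoiding[OF assms(1) coords[of Y0 Y1]] by (auto simp: factor_vars_def)
  let ?L = "lin_form X0 X1 t" and ?M = "lin_form Y0 Y1 s"
  have nonvanishing: "\<forall>P\<in>X. peval ?L P \<noteq> 0" "\<forall>P\<in>X. peval ?M P \<noteq> 0"
    using s t by (simp_all add: peval_lin_form)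
  have nzd: "\<And>F. ?L * F = 0 \<Longrightarrow> F = 0" "\<And>F. ?M * F = 0 \<Longrightarrow> F = 0"
    by (rule lin_form_mult_eq_0; simp)+
  have row: "HF ?I (i' - 1) j' = HF ?I i' j' \<longleftrightarrow> mult_onto_mod ?L ?I 1 0 i' j'" for i' j'
    using HF_eq_iff_mult_onto_mod[OF assms(2) lin_form_bihom_part(1) nonvanishing(1) nzd(1), where m = m and i = i' and j = j']
    by simp
  have col: "HF ?I i' (j' - 1) = HF ?I i' j' \<longleftrightarrow> mult_onto_mod ?M ?I 0 1 i' j'" for i' j'
    using HF_eq_iff_mult_onto_mod[OF assms(2) lin_form_bihom_part(2) nonvanishing(2) nzd(2), where m = m and i = i' and j = j']
    by simp
  have "mult_onto_mod ?L ?I 1 0 (int i0) (int j0)" "mult_onto_mod ?M ?I 0 1 (int i0) (int j0)"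
    using assms(3,4) row col by blast+
  from mult_onto_mod_propagate[OF fat_ideal_is_ideal lin_form_bihom_part this assms(5,6)]
  show "HF ?I (int i - 1) (int j) = HF ?I (int i) (int j)" "HF ?I (int i) (int j - 1) = HF ?I (int i) (int j)"
    using row col by blast+
qed

lemma HF_fat_ideal_neq_0:
  fixes X :: "'k::field pt set"
  assumes "P \<in> X" "0 < m P" "F \<in> bihom_part i j" "peval F P \<noteq> 0"
  shows "HF (fat_ideal X m) i j \<noteq> 0"
proof
  let ?I = "fat_ideal X m"
  assume "HF ?I i j = 0"
  moreover have "bipoly.dim (?I \<inter> bihom_part i j) \<le> bipoly.dim (bihom_part i j :: 'k bipoly set)"
    by (rule bipoly.fin_dim_subspace_dim_mono[OF bihom_part_fin_dim]) blast
  ultimately have "bipoly.dim (?I \<inter> bihom_part i j) = bipoly.dim (bihom_part i j :: 'k bipoly set)"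
    by (simp add: HF_def pdim_def)
  moreover have "?I \<inter> bihom_part i j \<subseteq> bihom_part i j" by blast
  ultimately have "?I \<inter> bihom_part i j = bihom_part i j"
    using bipoly.fin_dim_subspace_dim_eq[OF bihom_part_fin_dim ideal_part_subspace[OF fat_ideal_is_ideal]] by blast
  then have "F \<in> ideal_pow (pt_ideal P) (m P)" using assms(1,3) by (auto simp: fat_ideal_def)
  then have "F \<in> vanishing P (m P)" using ideal_pow_subset_vanishing by blast
  moreover obtain k where "m P = Suc k" using assms(2) by (cases "m P") auto
  ultimately show False using assms(4) by (simp add: vanishing_Suc_iff)
qed

lemma HF_fat_ideal_axes_neq_0:
  assumes "\<forall>P\<in>X. valid_pt P" "\<forall>P\<in>X. 0 < m P" "X \<noteq> {}"
  shows "HF (fat_ideal X m) (int j) 0 \<noteq> 0" "HF (fat_ideal X m) 0 (int j) \<noteq> 0"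
proof -
  obtain P where P: "P \<in> X" using assms(3) by blast
  have power: "single (single v j) 1 \<in> bihom_part (int j * fst (vdeg v)) (int j * snd (vdeg v))"
    "peval (single (single v j) 1) P = coord P v ^ j" for v
    by (cases v; simp add: bihom_part_def bideg_def vdeg_def lookup_single peval_single monom_eval_def)+
  have HF: "HF (fat_ideal X m) (int j * fst (vdeg v)) (int j * snd (vdeg v)) \<noteq> 0" if "coord P v \<noteq> 0" for v
    by (rule HF_fat_ideal_neq_0[OF P _ power(1)]) (use assms(2) P that in \<open>simp_all add: power(2)\<close>)
  have "(coord P X0, coord P X1) \<noteq> (0, 0)" "(coord P Y0, coord P Y1) \<noteq> (0, 0)"
    using assms(1) P by (auto simp: valid_pt_def prod_eq_iff)
  then show "HF (fat_ideal X m) (int j) 0 \<noteq> 0" "HF (fat_ideal X m) 0 (int j) \<noteq> 0"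
    using HF[of X0] HF[of X1] HF[of Y0] HF[of Y1] by (auto simp: vdeg_def prod_eq_iff)
qed

lemma HF_Omega_trivial_degrees:
  fixes I :: "'k::field bipoly set"
  assumes "\<not> (0 \<le> i \<and> 0 \<le> j) \<or> (i, j) = (0, 0)"
  shows "HF_Omega I i j = 0"
proof -
  have "omega_part i j = ({0} :: 'k omega set)" using assms by (intro omega_part_trivial) auto
  then show ?thesis by (simp add: HF_Omega_def odim_def omega.dim_singleton_0)
qed

lemma HF_Omega_of_trivial_ideal_part:
  fixes I :: "'k::field bipoly set"
  assumes "is_bihom_ideal I" "pdim (I \<inter> bihom_part (int i) (int j)) = 0"
  shows "HF_Omega I (int i) (int j) = 4 * i * j + 2 * i + 2 * j"
proof -
  have "is_ideal I" using assms(1) by (simp add: is_bihom_ideal_def)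
  have "I \<inter> bihom_part (int i) (int j) = {0}"
    by (rule bipoly.fin_dim_subspace_dim_eq_0[OF ideal_part_fin_dim[OF \<open>is_ideal I\<close>]])
      (use assms(2) in \<open>simp add: pdim_def\<close>)
  then have "HF_Omega I (int i) (int j) = omega.dim (omega_part (int i) (int j) :: 'k omega set)"
    by (rule HF_Omega_of_zero_part[OF assms(1)])
  moreover have "bipoly.dim (bihom_part (int i - 1) (int j) :: 'k bipoly set) = i * (j + 1)"
    by (cases i) (simp_all add: dim_bihom_part)
  moreover have "bipoly.dim (bihom_part (int i) (int j - 1) :: 'k bipoly set) = (i + 1) * j"
    by (cases j) (simp_all add: dim_bihom_part)
  ultimately show ?thesis by (simp add: omega_part_dim(2) algebra_simps)
qed

lemma HF_Omega_UNIV: "HF_Omega (UNIV :: 'k::field bipoly set) i j = 0"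
proof -
  have "is_bihom_ideal (UNIV :: 'k bipoly set)" by (simp add: is_bihom_ideal_def is_ideal_UNIV)
  moreover have "omega_part i j \<subseteq> kahler_rel_part (UNIV :: 'k bipoly set) i j"
    using ideal_forms_subset_kahler_rel_part[OF is_ideal_UNIV] by (auto simp: ideal_forms_def omega_part_def)
  ultimately have "kahler_rel UNIV \<inter> omega_part i j = (omega_part i j :: 'k omega set)"
    using kahler_rel_Int_omega_part by blast
  then show ?thesis by (simp add: HF_Omega_def)
qed

lemma HF_Omega_fat_ideal_stable:
  fixes X :: "'k::field_char_0 pt set"
  assumes "finite X" "\<forall>P\<in>X. valid_pt P" "\<forall>P\<in>X. 0 < m P"
    and "HF (fat_ideal X m) (int i0 - 1) (int j0) = HF (fat_ideal X m) (int i0) (int j0)"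
    and "HF (fat_ideal X m) (int i0) (int j0) = HF (fat_ideal X m) (int i0) (int j0 - 1)"
    and "i0 \<le> i" "j0 \<le> j"
  shows "int (HF_Omega (fat_ideal X m) (int i) (int j))
    = 5 * int (HF (fat_ideal X m) (int i) (int j)) - int (HF (fat_ideal X (\<lambda>P. m P + 1)) (int i) (int j))"
proof (cases "X = {}")
  case True
  then show ?thesis by (simp add: fat_ideal_empty HF_UNIV HF_Omega_UNIV)
next
  case False
  have "i0 \<noteq> 0"
  proof
    assume "i0 = 0"
    then have "HF (fat_ideal X m) 0 (int j0) = 0" using assms(4) HF_neg[of "- 1" "int j0" "fat_ideal X m"] by simp
    then show False using HF_fat_ideal_axes_neq_0(2)[OF assms(2,3) False] by simp
  qed
  then have "1 \<le> int i" using assms(6) by simp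
  with HF_fat_ideal_stable[OF assms(1,2,4) assms(5)[symmetric] assms(6,7)] show ?thesis
    using HF_Omega_fat_ideal[OF assms(2,3)] by simp
qed

theorem proposition3p9:
  fixes X :: "'k::field_char_0 pt set" and m :: "'k pt \<Rightarrow> nat"
  assumes "finite X"
    and "\<forall>P\<in>X. valid_pt P"
    and "\<forall>P\<in>X. \<forall>Q\<in>X. same_pt P Q \<longrightarrow> P = Q"
    and "\<forall>P\<in>X. 0 < m P"
  shows "(\<forall>i j. (\<not> (0 \<le> i \<and> 0 \<le> j) \<or> (i, j) = (0, 0)) \<longrightarrow> HF_Omega (fat_ideal X m) i j = 0)
    \<and> (\<forall>i j :: nat. pdim (fat_ideal X m \<inter> bihom_part (int i) (int j)) = 0 \<longrightarrow>
          HF_Omega (fat_ideal X m) (int i) (int j) = 4 * i * j + 2 * i + 2 * j)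
    \<and> (\<forall>i0 j0 :: nat.
          HF (fat_ideal X m) (int i0 - 1) (int j0) = HF (fat_ideal X m) (int i0) (int j0)
          \<and> HF (fat_ideal X m) (int i0) (int j0) = HF (fat_ideal X m) (int i0) (int j0 - 1)
          \<longrightarrow> (\<forall>i j :: nat. i0 \<le> i \<and> j0 \<le> j \<longrightarrow>
                int (HF_Omega (fat_ideal X m) (int i) (int j))
                  = 5 * int (HF (fat_ideal X m) (int i) (int j))
                    - int (HF (fat_ideal X (\<lambda>P. m P + 1)) (int i) (int j))))"
proof (intro conjI allI impI)
  fix i j :: int
  assume "\<not> (0 \<le> i \<and> 0 \<le> j) \<or> (i, j) = (0, 0)"
  then show "HF_Omega (fat_ideal X m) i j = 0" by (rule HF_Omega_trivial_degrees)
next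
  fix i j :: nat
  assume "pdim (fat_ideal X m \<inter> bihom_part (int i) (int j)) = 0"
  then show "HF_Omega (fat_ideal X m) (int i) (int j) = 4 * i * j + 2 * i + 2 * j"
    by (rule HF_Omega_of_trivial_ideal_part[OF fat_ideal_is_bihom_ideal])
next
  fix i0 j0 i j :: nat
  assume "HF (fat_ideal X m) (int i0 - 1) (int j0) = HF (fat_ideal X m) (int i0) (int j0)
      \<and> HF (fat_ideal X m) (int i0) (int j0) = HF (fat_ideal X m) (int i0) (int j0 - 1)"
    and "i0 \<le> i \<and> j0 \<le> j"
  then show "int (HF_Omega (fat_ideal X m) (int i) (int j))
      = 5 * int (HF (fat_ideal X m) (int i) (int j)) - int (HF (fat_ideal X (\<lambda>P. m P + 1)) (int i) (int j))"
    using HF_Omega_fat_ideal_stable[OF assms(1,2,4)] by blast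
qed

end
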